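(* Let $T\in\mathcal B(\mathcal H)$ be such that either $T$ or $T^*$ is quasitriangular. Let $\{P_n\}$ be a filtration with $\|(I-P_n)TP_n\|\to0$ in the first case and with $\|(I-P_n)T^*P_n\|\to0$ in the second case, and put $T_n=P_nT|_{P_n\mathcal H}$. Then $\Psi_{T_n}\to\Psi_T$ uniformly on $\mathbb C$.
   Context: $\mathcal H$ is a complex separable Hilbert space. For an operator $A$, $\Psi_A(z)=0$ for $z\in\sigma(A)$ and $\Psi_A(z)=\|(A-z)^{-1}\|^{-1}$ otherwise. A filtration is a sequence $\{P_n\}$ of finite-rank orthogonal projections with $\operatorname{Ran}P_n\subseteq\operatorname{Ran}P_{n+1}$ and $\bigcup_n\operatorname{Ran}P_n$ dense. $T$ is quasitriangular if there is a filtration $\{P_n\}$ with $\|(I-P_n)TP_n\|\to0$. *)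

theory Defs
  imports "HOL-Analysis.Analysis"
begin

class complex_vector = real_vector +
  fixes scaleC :: "complex \<Rightarrow> 'a \<Rightarrow> 'a" (infixr "*\<^sub>C" 75)
  assumes scaleC_add_right: "c *\<^sub>C (x + y) = c *\<^sub>C x + c *\<^sub>C y"
    and scaleC_add_left: "(c + d) *\<^sub>C x = c *\<^sub>C x + d *\<^sub>C x"
    and scaleC_scaleC: "c *\<^sub>C (d *\<^sub>C x) = (c * d) *\<^sub>C x"
    and scaleC_one: "1 *\<^sub>C x = x"
    and scaleR_scaleC: "r *\<^sub>R x = complex_of_real r *\<^sub>C x"

class complex_inner = complex_vector + real_normed_vector +
  fixes cinner :: "'a \<Rightarrow> 'a \<Rightarrow> complex"
  assumes cinner_commute: "cinner x y = cnj (cinner y x)"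
    and cinner_add_left: "cinner (x + y) z = cinner x z + cinner y z"
    and cinner_scaleC_left: "cinner (c *\<^sub>C x) y = cnj c * cinner x y"
    and cinner_self_norm: "cinner x x = complex_of_real ((norm x)\<^sup>2)"

class chilbert_space = complex_inner + complete_space

definition separable_space :: "'a::topological_space itself \<Rightarrow> bool" where
  "separable_space _ \<longleftrightarrow> (\<exists>D::'a set. countable D \<and> closure D = UNIV)"

definition bounded_clinear :: "('a::complex_inner \<Rightarrow> 'b::complex_inner) \<Rightarrow> bool" where
  "bounded_clinear f \<longleftrightarrow> bounded_linear f \<and> (\<forall>c x. f (c *\<^sub>C x) = c *\<^sub>C f x)"

definition cspan :: "'a::complex_vector set \<Rightarrow> 'a set" where
  "cspan F = {x. \<exists>c. x = (\<Sum>v\<in>F. c v *\<^sub>C v)}"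

definition adj :: "('a::complex_inner \<Rightarrow> 'a) \<Rightarrow> 'a \<Rightarrow> 'a" where
  "adj T y = (THE z. \<forall>x. cinner (T x) y = cinner x z)"

definition is_orth_proj :: "('a::complex_inner \<Rightarrow> 'a) \<Rightarrow> bool" where
  "is_orth_proj P \<longleftrightarrow> bounded_clinear P \<and> (\<forall>x. P (P x) = P x)
      \<and> (\<forall>x y. cinner (P x) y = cinner x (P y))"

definition finite_rank :: "('a::complex_inner \<Rightarrow> 'a) \<Rightarrow> bool" where
  "finite_rank P \<longleftrightarrow> (\<exists>F. finite F \<and> range P \<subseteq> cspan F)"

definition filtration :: "(nat \<Rightarrow> 'a::complex_inner \<Rightarrow> 'a) \<Rightarrow> bool" where
  "filtration P \<longleftrightarrow> (\<forall>n. is_orth_proj (P n) \<and> finite_rank (P n))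
      \<and> (\<forall>n. range (P n) \<subseteq> range (P (Suc n)))
      \<and> closure (\<Union>n. range (P n)) = UNIV"

definition offdiag :: "('a::complex_inner \<Rightarrow> 'a) \<Rightarrow> ('a \<Rightarrow> 'a) \<Rightarrow> 'a \<Rightarrow> 'a" where
  "offdiag P T = (\<lambda>x. T (P x) - P (T (P x)))"

definition quasitriangular :: "('a::complex_inner \<Rightarrow> 'a) \<Rightarrow> bool" where
  "quasitriangular T \<longleftrightarrow>
     (\<exists>P. filtration P \<and> (\<lambda>n. onorm (offdiag (P n) T)) \<longlonglongrightarrow> 0)"

definition resolvent_on :: "'a::complex_inner set \<Rightarrow> ('a \<Rightarrow> 'a) \<Rightarrow> complex \<Rightarrow> ('a \<Rightarrow> 'a) \<Rightarrow> bool" where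
  "resolvent_on M A z B \<longleftrightarrow>
     (\<forall>x\<in>M. B x \<in> M \<and> B (A x - z *\<^sub>C x) = x \<and> A (B x) - z *\<^sub>C B x = x)
     \<and> (\<forall>x\<in>M. \<forall>y\<in>M. \<forall>c. B (x + y) = B x + B y \<and> B (c *\<^sub>C x) = c *\<^sub>C B x)
     \<and> (\<exists>K. \<forall>x\<in>M. norm (B x) \<le> K * norm x)"

definition spectrum_on :: "'a::complex_inner set \<Rightarrow> ('a \<Rightarrow> 'a) \<Rightarrow> complex set" where
  "spectrum_on M A = {z. \<not> (\<exists>B. resolvent_on M A z B)}"

definition opnorm_on :: "'a::complex_inner set \<Rightarrow> ('a \<Rightarrow> 'a) \<Rightarrow> real" where
  "opnorm_on M B = (SUP x\<in>M - {0}. norm (B x) / norm x)"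

definition Psi_on :: "'a::complex_inner set \<Rightarrow> ('a \<Rightarrow> 'a) \<Rightarrow> complex \<Rightarrow> real" where
  "Psi_on M A z = (if z \<in> spectrum_on M A then 0
      else inverse (opnorm_on M (SOME B. resolvent_on M A z B)))"

abbreviation Psi :: "('a::complex_inner \<Rightarrow> 'a) \<Rightarrow> complex \<Rightarrow> real" where
  "Psi A \<equiv> Psi_on UNIV A"

end

theory Submission
  imports Defs
begin

text \<open>For a finite-rank projection \<open>Q\<close>, and for the whole space when the operator has a
  filtration with small off-diagonal parts, \<open>\<Psi>\<close> equals the minimum modulus
  \<open>inf {\<parallel>(A - z) x\<parallel> | \<parallel>x\<parallel> = 1}\<close>: an operator bounded below is then also surjective, in the first
  case by finite dimensionality, in the second because the finite sections \<open>P\<^sub>n S P\<^sub>n\<close> inherit the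
  lower bound and their solutions converge. If instead \<open>T\<^sup>*\<close> has such a filtration, the same
  holds with the minimum modulus of \<open>T\<^sup>* - z\<^sup>*\<close>, by duality (a bounded right inverse makes the adjoint
  bounded below, and the Riesz representation theorem turns a bounded left inverse of the adjoint
  into surjectivity).

  It remains to show that the minimum moduli of the finite sections converge uniformly in \<open>z\<close>.
  They can drop by at most \<open>\<parallel>(I - P\<^sub>n) S P\<^sub>n\<parallel>\<close>. They cannot rise much, because every unit vector is
  approximated from \<open>range P\<^sub>n\<close>; uniformity follows from compactness for bounded \<open>z\<close>, and for
  large \<open>z\<close> from the expansion of \<open>\<parallel>S x - z x\<parallel>\<^sup>2\<close>, which reduces the problem to the compact set of
  directions \<open>z / \<bar>z\<bar>\<close>.\<close>

section \<open>Complex inner product spaces\<close>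

lemma scaleC_zero_right [simp]: "c *\<^sub>C (0::'a::complex_vector) = 0"
proof -
  have "c *\<^sub>C (0::'a) + c *\<^sub>C 0 = c *\<^sub>C 0 + 0" by (simp flip: scaleC_add_right)
  then show ?thesis by (rule add_left_imp_eq)
qed

lemma scaleC_zero_left [simp]: "0 *\<^sub>C (x::'a::complex_vector) = 0"
proof -
  have "0 *\<^sub>C x + 0 *\<^sub>C x = 0 *\<^sub>C x + 0" by (simp flip: scaleC_add_left)
  then show ?thesis by (rule add_left_imp_eq)
qed

lemma scaleC_minus_right: "c *\<^sub>C (- (x::'a::complex_vector)) = - (c *\<^sub>C x)"
proof -
  have "c *\<^sub>C (- x) + c *\<^sub>C x = 0" by (simp flip: scaleC_add_right)
  then show ?thesis by (simp add: eq_neg_iff_add_eq_0)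
qed

lemma scaleC_diff_right: "c *\<^sub>C ((x::'a::complex_vector) - y) = c *\<^sub>C x - c *\<^sub>C y"
  unfolding diff_conv_add_uminus by (simp only: scaleC_add_right scaleC_minus_right)

lemma scaleC_minus_left: "(- c) *\<^sub>C (x::'a::complex_vector) = - (c *\<^sub>C x)"
proof -
  have "(- c) *\<^sub>C x + c *\<^sub>C x = 0" by (simp flip: scaleC_add_left)
  then show ?thesis by (simp add: eq_neg_iff_add_eq_0)
qed

lemma scaleC_diff_left: "(c - d) *\<^sub>C (x::'a::complex_vector) = c *\<^sub>C x - d *\<^sub>C x"
  unfolding diff_conv_add_uminus by (simp only: scaleC_add_left scaleC_minus_left)

lemma scaleR_scaleC_commute: "r *\<^sub>R (c *\<^sub>C (x::'a::complex_vector)) = c *\<^sub>C (r *\<^sub>R x)"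
  by (simp add: scaleR_scaleC scaleC_scaleC mult.commute)

lemma cinner_add_right: "cinner x (y + z) = cinner x y + cinner (x::'a::complex_inner) z"
  by (subst (1 2 3) cinner_commute) (simp add: cinner_add_left)

lemma cinner_scaleC_right: "cinner x (c *\<^sub>C y) = c * cinner (x::'a::complex_inner) y"
  by (subst (1 2) cinner_commute) (simp add: cinner_scaleC_left)

lemma cinner_zero_left [simp]: "cinner 0 (x::'a::complex_inner) = 0"
  using cinner_scaleC_left[of 0 x x] by simp

lemma cinner_zero_right [simp]: "cinner x (0::'a::complex_inner) = 0"
  using cinner_scaleC_right[of x 0 x] by simp

lemma cinner_minus_left: "cinner (- x) (y::'a::complex_inner) = - cinner x y"
proof -
  have "cinner (- x) y + cinner x y = 0" by (simp flip: cinner_add_left)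
  then show ?thesis by (simp add: eq_neg_iff_add_eq_0)
qed

lemma cinner_minus_right: "cinner x (- y::'a::complex_inner) = - cinner x y"
proof -
  have "cinner x (- y) + cinner x y = 0" by (simp flip: cinner_add_right)
  then show ?thesis by (simp add: eq_neg_iff_add_eq_0)
qed

lemma cinner_diff_left: "cinner (x - y) (z::'a::complex_inner) = cinner x z - cinner y z"
  unfolding diff_conv_add_uminus by (simp only: cinner_add_left cinner_minus_left)

lemma cinner_diff_right: "cinner x (y - z::'a::complex_inner) = cinner x y - cinner x z"
  unfolding diff_conv_add_uminus by (simp only: cinner_add_right cinner_minus_right)

lemma cinner_scaleR_right: "cinner x (r *\<^sub>R y::'a::complex_inner) = complex_of_real r * cinner x y"
  by (simp add: scaleR_scaleC cinner_scaleC_right)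

lemma Re_cinner_self: "Re (cinner x (x::'a::complex_inner)) = (norm x)\<^sup>2"
  by (simp add: cinner_self_norm)

lemma cinner_eqI: "(\<And>x. cinner x a = cinner x (b::'a::complex_inner)) \<Longrightarrow> a = b"
proof -
  assume h: "\<And>x. cinner x a = cinner x b"
  have "cinner (a - b) (a - b) = 0" using h[of "a - b"] by (simp add: cinner_diff_right)
  then have "(norm (a - b))\<^sup>2 = 0" by (simp add: cinner_self_norm)
  then show "a = b" by simp
qed

lemma norm_scaleC: "norm (c *\<^sub>C (x::'a::complex_inner)) = cmod c * norm x"
proof -
  have "(norm (c *\<^sub>C x))\<^sup>2 = Re (cinner (c *\<^sub>C x) (c *\<^sub>C x))" by (simp only: Re_cinner_self)
  also have "\<dots> = Re (cnj c * c) * (norm x)\<^sup>2"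
    by (simp only: cinner_scaleC_left cinner_scaleC_right mult.assoc)
      (simp add: cinner_self_norm algebra_simps)
  also have "Re (cnj c * c) = (cmod c)\<^sup>2"
    by (simp add: cmod_def power2_eq_square)
  finally have "(norm (c *\<^sub>C x))\<^sup>2 = (cmod c * norm x)\<^sup>2"
    by (simp add: power_mult_distrib)
  then show ?thesis
    by (simp add: power2_eq_iff_nonneg)
qed

lemma norm_add_sq:
  "(norm (x + y::'a::complex_inner))\<^sup>2 = (norm x)\<^sup>2 + (norm y)\<^sup>2 + 2 * Re (cinner x y)"
proof -
  have "(norm (x + y))\<^sup>2 = Re (cinner (x + y) (x + y))" by (simp only: Re_cinner_self)
  also have "\<dots> = Re (cinner x x) + Re (cinner y y) + Re (cinner x y) + Re (cinner y x)"
    by (simp add: cinner_add_left cinner_add_right)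
  also have "Re (cinner y x) = Re (cinner x y)" by (subst cinner_commute) simp
  finally show ?thesis by (simp add: Re_cinner_self)
qed

lemma norm_diff_sq:
  "(norm (x - y::'a::complex_inner))\<^sup>2 = (norm x)\<^sup>2 + (norm y)\<^sup>2 - 2 * Re (cinner x y)"
  using norm_add_sq[of x "-y"] by (simp add: cinner_minus_right)

lemma norm_diff_scaleC_optimal:
  fixes x y :: "'a::complex_inner"
  assumes "y \<noteq> 0"
  defines "t \<equiv> cnj (cinner x y) / complex_of_real ((norm y)\<^sup>2)"
  shows "(norm (x - t *\<^sub>C y))\<^sup>2 = (norm x)\<^sup>2 - (cmod (cinner x y))\<^sup>2 / (norm y)\<^sup>2"
proof -
  define a where "a = cinner x y"
  define n where "n = (norm y)\<^sup>2"
  have n: "n > 0" using assms(1) by (simp add: n_def)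
  have t: "t = cnj a / complex_of_real n" by (simp add: t_def a_def n_def)
  have "(norm (x - t *\<^sub>C y))\<^sup>2 = (norm x)\<^sup>2 + (cmod t)\<^sup>2 * n - 2 * Re (t * a)"
    by (simp add: norm_diff_sq norm_scaleC cinner_scaleC_right power_mult_distrib a_def n_def)
  also have "t * a = complex_of_real ((cmod a)\<^sup>2 / n)"
  proof -
    have "cnj a * a = complex_of_real ((cmod a)\<^sup>2)"
      using complex_norm_square[of a] by (simp only: mult.commute)
    then show ?thesis unfolding t by (metis of_real_divide times_divide_eq_left)
  qed
  also have "(cmod t)\<^sup>2 * n = (cmod a)\<^sup>2 / n"
    unfolding t using n by (simp add: norm_divide power_divide complex_mod_cnj power2_eq_square)
  finally show ?thesis by (simp add: a_def n_def)
qed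

lemma cinner_Cauchy_Schwarz: "cmod (cinner x y) \<le> norm x * norm (y::'a::complex_inner)"
proof (cases "y = 0")
  case False
  have "0 \<le> (norm x)\<^sup>2 - (cmod (cinner x y))\<^sup>2 / (norm y)\<^sup>2"
    using norm_diff_scaleC_optimal[OF False, of x] by (metis zero_le_power2)
  then have "(cmod (cinner x y))\<^sup>2 \<le> (norm x * norm y)\<^sup>2"
    using False by (simp add: field_simps power_mult_distrib)
  then show ?thesis by (rule power2_le_imp_le) simp
qed simp

lemma bounded_linear_scaleC: "bounded_linear (\<lambda>x::'a::complex_inner. c *\<^sub>C x)"
  by (rule bounded_linear_intro[where K="cmod c"])
    (simp_all add: scaleC_add_right scaleR_scaleC_commute norm_scaleC mult.commute)

section \<open>Orthogonal projections, compressions and filtrations\<close>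

context
  fixes Q :: "'a::complex_inner \<Rightarrow> 'a"
  assumes Q: "is_orth_proj Q"
begin

lemma orth_proj_bounded_linear: "bounded_linear Q"
  using Q unfolding is_orth_proj_def bounded_clinear_def by blast

lemma orth_proj_scaleC: "Q (c *\<^sub>C x) = c *\<^sub>C Q x"
  using Q unfolding is_orth_proj_def bounded_clinear_def by blast

lemma orth_proj_idem: "Q (Q x) = Q x"
  using Q unfolding is_orth_proj_def by blast

lemma orth_proj_self_adjoint: "cinner (Q x) y = cinner x (Q y)"
  using Q unfolding is_orth_proj_def by blast

lemma orth_proj_diff: "Q (x - y) = Q x - Q y"
  using orth_proj_bounded_linear by (rule linear_simps)

lemma orth_proj_range_iff: "x \<in> range Q \<longleftrightarrow> Q x = x"
  by (metis orth_proj_idem rangeE rangeI)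

lemma orth_proj_subspace: "subspace (range Q)"
  using linear_subspace_image[OF bounded_linear.linear[OF orth_proj_bounded_linear] subspace_UNIV] .

lemma orth_proj_range_scaleC: "x \<in> range Q \<Longrightarrow> c *\<^sub>C x \<in> range Q"
  by (simp add: orth_proj_range_iff orth_proj_scaleC)

lemma orth_proj_orthogonal: "cinner (y - Q y) (Q x) = 0"
  by (subst cinner_commute)
    (simp add: cinner_diff_right orth_proj_self_adjoint[of x "Q y"] orth_proj_idem orth_proj_self_adjoint[of x y])

lemma norm_orth_proj_le: "norm (Q x) \<le> norm x"
proof -
  have "(norm x)\<^sup>2 = (norm (Q x + (x - Q x)))\<^sup>2" by simp
  also have "\<dots> = (norm (Q x))\<^sup>2 + (norm (x - Q x))\<^sup>2"
    by (simp only: norm_add_sq cinner_commute[of "Q x"] orth_proj_orthogonal) simp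
  finally have "(norm (Q x))\<^sup>2 \<le> (norm x)\<^sup>2" by simp
  then show ?thesis by (rule power2_le_imp_le) simp
qed

lemma orth_proj_best_approx:
  assumes "v \<in> range Q"
  shows "norm (x - Q x) \<le> norm (x - v)"
proof -
  have e: "x - v = (x - Q x) + Q (x - v)"
    using assms by (simp add: orth_proj_diff orth_proj_idem orth_proj_range_iff)
  have "(norm (x - v))\<^sup>2 = (norm (x - Q x))\<^sup>2 + (norm (Q (x - v)))\<^sup>2"
    by (subst e, simp only: norm_add_sq orth_proj_orthogonal) simp
  then have "(norm (x - Q x))\<^sup>2 \<le> (norm (x - v))\<^sup>2" by simp
  then show ?thesis by (rule power2_le_imp_le) simp
qed

lemma orth_proj_range_unit:
  assumes "range Q \<noteq> {0}"
  obtains u where "u \<in> range Q" "norm u = 1"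
proof -
  have "Q 0 = 0" using orth_proj_diff[of 0 0] by simp
  then obtain x where x: "x \<in> range Q" "x \<noteq> 0"
    using assms by (metis empty_iff insertI1 rangeI subsetI subset_singletonD)
  show ?thesis
  proof
    show "(1 / norm x) *\<^sub>R x \<in> range Q" using subspace_scale[OF orth_proj_subspace x(1)] .
    show "norm ((1 / norm x) *\<^sub>R x) = 1" using x(2) by simp
  qed
qed

text \<open>On \<open>range Q\<close>, the map \<open>x \<mapsto> Q (A x) - z x\<close> is the compression \<open>Q A Q - z\<close>; for \<open>Q = P\<^sub>n\<close> it is
  the operator \<open>T\<^sub>n - z\<close> of the informal statement.\<close>

lemma compression_shift_eq:
  assumes "x \<in> range Q"
  shows "Q (A x) - z *\<^sub>C x = Q (A x - z *\<^sub>C x)"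
  using assms by (simp add: orth_proj_diff orth_proj_scaleC orth_proj_range_iff)

lemma compression_shift_in_range: "x \<in> range Q \<Longrightarrow> Q (A x) - z *\<^sub>C x \<in> range Q"
  by (simp add: compression_shift_eq)

lemma cinner_compression_shift:
  assumes adj: "\<And>x y. cinner (A x) y = cinner x (A' y)" and "x \<in> range Q" "y \<in> range Q"
  shows "cinner (Q (A x) - z *\<^sub>C x) y = cinner x (Q (A' y) - cnj z *\<^sub>C y)"
proof -
  have "cinner (Q (A x)) y = cinner x (Q (A' y))"
    using assms orth_proj_self_adjoint[of "A x" y] orth_proj_self_adjoint[of x "A' y"] adj[of x y]
    by (simp add: orth_proj_range_iff)
  then show ?thesis
    by (simp add: cinner_diff_left cinner_diff_right cinner_scaleC_left cinner_scaleC_right)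
qed

lemma offdiag_shift: "offdiag Q (\<lambda>x. S x - z *\<^sub>C x) = offdiag Q S"
  by (rule ext) (simp add: offdiag_def orth_proj_diff orth_proj_scaleC orth_proj_idem)

lemma bounded_linear_offdiag: "bounded_linear S \<Longrightarrow> bounded_linear (offdiag Q S)"
  unfolding offdiag_def
  by (rule bounded_linear_sub[OF bounded_linear_compose[OF _ orth_proj_bounded_linear]
        bounded_linear_compose[OF orth_proj_bounded_linear bounded_linear_compose[OF _ orth_proj_bounded_linear]]])

lemma norm_offdiag_le:
  assumes S: "bounded_linear S" and x: "x \<in> range Q"
  shows "norm (S x - Q (S x)) \<le> onorm (offdiag Q S) * norm x"
proof -
  have "offdiag Q S x = S x - Q (S x)"
    using x by (simp add: offdiag_def orth_proj_range_iff)
  then show ?thesis using onorm[OF bounded_linear_offdiag[OF S], of x] by simp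
qed

lemma norm_compression_shift_ge:
  assumes S: "bounded_linear S" and x: "x \<in> range Q"
  shows "norm (S x - z *\<^sub>C x) - onorm (offdiag Q S) * norm x \<le> norm (Q (S x) - z *\<^sub>C x)"
proof -
  have "norm (S x - z *\<^sub>C x) \<le> norm (Q (S x) - z *\<^sub>C x) + norm (S x - Q (S x))"
    by (rule order_trans[OF _ norm_triangle_ineq]) simp
  then show ?thesis using norm_offdiag_le[OF S x] by linarith
qed

end

lemma is_orth_proj_id: "is_orth_proj id"
  unfolding is_orth_proj_def bounded_clinear_def id_def by (simp add: bounded_linear_ident)

context
  fixes P :: "nat \<Rightarrow> 'a::complex_inner \<Rightarrow> 'a"
  assumes P: "filtration P"
begin

lemma filtration_orth_proj: "is_orth_proj (P n)"
  using P unfolding filtration_def by blast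

lemma filtration_finite_rank: "finite_rank (P n)"
  using P unfolding filtration_def by blast

lemma filtration_range_mono: "m \<le> n \<Longrightarrow> range (P m) \<subseteq> range (P n)"
  by (rule lift_Suc_mono_le[of "\<lambda>n. range (P n)"]) (use P in \<open>auto simp: filtration_def\<close>)

lemma filtration_tendsto: "(\<lambda>n. P n x) \<longlonglongrightarrow> x"
proof (rule LIMSEQ_I)
  fix e :: real assume e: "e > 0"
  have "x \<in> closure (\<Union>n. range (P n))" using P unfolding filtration_def by blast
  then obtain v where "v \<in> (\<Union>n. range (P n))" "dist v x < e"
    using e closure_approachable by blast
  then obtain m where v: "v \<in> range (P m)" "dist v x < e" by blast
  show "\<exists>N. \<forall>n\<ge>N. norm (P n x - x) < e"
  proof (intro exI allI impI)
    fix n assume "m \<le> n"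
    then have "v \<in> range (P n)" using v(1) filtration_range_mono by blast
    then have "norm (x - P n x) \<le> norm (x - v)" by (rule orth_proj_best_approx[OF filtration_orth_proj])
    then show "norm (P n x - x) < e" using v(2) by (simp add: dist_norm norm_minus_commute)
  qed
qed

lemma filtration_eventually_nontrivial:
  assumes "(UNIV :: 'a set) \<noteq> {0}"
  shows "\<forall>\<^sub>F n in sequentially. range (P n) \<noteq> {0}"
proof -
  obtain x :: 'a where "x \<noteq> 0" using assms by blast
  then have "\<forall>\<^sub>F n in sequentially. P n x \<noteq> 0"
    by (rule tendsto_imp_eventually_ne[OF filtration_tendsto])
  then show ?thesis by eventually_elim blast
qed

lemma filtration_approx_unit:
  assumes y: "norm y = 1" and e: "e > 0"
  shows "\<forall>\<^sub>F n in sequentially. \<exists>x\<in>range (P n). norm x = 1 \<and> norm (x - y) \<le> e"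
proof -
  have "\<forall>\<^sub>F n in sequentially. dist (P n y) y < min (e / 2) (1 / 2)"
    using filtration_tendsto e by (intro tendstoD) auto
  then show ?thesis
  proof eventually_elim
    case (elim n)
    define p where "p = P n y"
    have dp: "norm (p - y) < min (e / 2) (1 / 2)" using elim by (simp add: p_def dist_norm)
    have "norm y - norm (p - y) \<le> norm p"
      using norm_triangle_ineq2[of y "y - p"] by (simp add: norm_minus_commute)
    then have p0: "norm p > 0" using dp y by linarith
    define x where "x = (1 / norm p) *\<^sub>R p"
    have "x \<in> range (P n)"
      unfolding x_def p_def by (rule subspace_scale[OF orth_proj_subspace[OF filtration_orth_proj]]) simp
    moreover have "norm x = 1" using p0 by (simp add: x_def)
    moreover have "norm (x - y) \<le> e"
    proof -
      have "x - p = (1 / norm p - 1) *\<^sub>R p" by (simp add: x_def algebra_simps)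
      then have "norm (x - p) = \<bar>1 / norm p - 1\<bar> * norm p" by simp
      also have "\<dots> = \<bar>1 - norm p\<bar>"
        using p0 by (simp add: abs_mult_pos' flip: abs_mult) (simp add: field_simps)
      also have "\<dots> \<le> norm (p - y)"
        using norm_triangle_ineq3[of p y] y by (simp add: abs_minus_commute)
      finally show ?thesis using norm_triangle_ineq[of "x - p" "p - y"] dp by simp
    qed
    ultimately show ?case by blast
  qed
qed

end

section \<open>Finite-rank compressions and resolvents\<close>

lemma scaleC_eq_scaleR_combination: "c *\<^sub>C (v::'a::complex_vector) = Re c *\<^sub>R v + Im c *\<^sub>R (\<i> *\<^sub>C v)"
proof -
  have "c = complex_of_real (Re c) + complex_of_real (Im c) * \<i>" by (simp add: complex_eq_iff)
  then have "c *\<^sub>C v = complex_of_real (Re c) *\<^sub>C v + (complex_of_real (Im c) * \<i>) *\<^sub>C v"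
    by (metis scaleC_add_left)
  also have "\<dots> = Re c *\<^sub>R v + Im c *\<^sub>R (\<i> *\<^sub>C v)"
    by (simp add: scaleR_scaleC scaleC_scaleC)
  finally show ?thesis .
qed

lemma cspan_subset_span: "cspan F \<subseteq> span (F \<union> (\<lambda>v. \<i> *\<^sub>C v) ` F)"
proof
  fix x assume "x \<in> cspan F"
  then obtain c where x: "x = (\<Sum>v\<in>F. c v *\<^sub>C v)" unfolding cspan_def by blast
  show "x \<in> span (F \<union> (\<lambda>v. \<i> *\<^sub>C v) ` F)"
    unfolding x
  proof (rule span_sum)
    fix v assume "v \<in> F"
    then show "c v *\<^sub>C v \<in> span (F \<union> (\<lambda>v. \<i> *\<^sub>C v) ` F)"
      unfolding scaleC_eq_scaleR_combination[of "c v" v]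
      by (intro span_add span_scale span_base) auto
  qed
qed

lemma span_subset_span_if_independent_card_ge:
  fixes B C :: "'a::real_vector set"
  assumes B: "finite B" and C: "independent C" "C \<subseteq> span B" and card: "card B \<le> card C"
  shows "span B \<subseteq> span C"
proof
  fix a assume a: "a \<in> span B"
  show "a \<in> span C"
  proof (rule ccontr)
    assume na: "a \<notin> span C"
    have "a \<notin> C"
    proof
      assume "a \<in> C"
      then have "a \<in> span C" by (rule span_base)
      with na show False by contradiction
    qed
    have "finite C" using independent_span_bound[OF B C] by blast
    have "insert a C \<subseteq> span B" using a C(2) by blast
    then have "card (insert a C) \<le> card B"
      using independent_span_bound[OF B independent_insertI[OF na C(1)]] by blast
    also have "\<dots> < card (insert a C)" using card card_insert_disjoint[OF \<open>finite C\<close> \<open>a \<notin> C\<close>] by simp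
    finally show False by simp
  qed
qed

text \<open>The range of a finite-rank projection is finite dimensional over \<open>\<real>\<close>, so a real-linear map
  of it into itself that is injective is also surjective.\<close>
lemma finite_rank_inj_on_imp_surj_on:
  fixes Q A :: "'a::complex_inner \<Rightarrow> 'a"
  assumes Q: "is_orth_proj Q" and fr: "finite_rank Q" and A: "linear A"
    and into: "A ` range Q \<subseteq> range Q"
    and inj: "\<And>x. x \<in> range Q \<Longrightarrow> A x = 0 \<Longrightarrow> x = 0"
  shows "range Q \<subseteq> A ` range Q"
proof -
  define M where "M = range Q"
  have sM: "subspace M" unfolding M_def by (rule orth_proj_subspace[OF Q])
  obtain F where F: "finite F" "range Q \<subseteq> cspan F" using fr unfolding finite_rank_def by blast
  define G where "G = F \<union> (\<lambda>v. \<i> *\<^sub>C v) ` F"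
  have fG: "finite G" using F(1) unfolding G_def by simp
  have MG: "M \<subseteq> span G" using F(2) cspan_subset_span[of F] unfolding M_def G_def by blast
  obtain B where B: "B \<subseteq> M" "independent B" "M \<subseteq> span B" "card B = dim M"
    by (rule basis_exists)
  have fB: "finite B" using independent_span_bound[OF fG B(2)] B(1) MG by blast
  have spB: "span B = M" using span_minimal[OF B(1) sM] B(3) by blast
  have injM: "inj_on A M"
  proof (rule inj_onI)
    fix u v assume uv: "u \<in> M" "v \<in> M" "A u = A v"
    have "u - v \<in> M" using uv sM by (simp add: subspace_diff)
    moreover have "A (u - v) = 0" using uv(3) A by (simp add: linear_diff)
    ultimately have "u - v = 0" using inj unfolding M_def by blast
    then show "u = v" by simp
  qed
  have "independent (A ` B)"
    using linear_independent_injective_image[OF A B(2)] injM spB by simp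
  moreover have "A ` B \<subseteq> span B"
    using order_trans[OF image_mono[OF B(1)] into[folded M_def]] spB by simp
  moreover have "card B \<le> card (A ` B)"
    using card_image[OF inj_on_subset[OF injM B(1)]] by simp
  ultimately have "span B \<subseteq> span (A ` B)"
    by (rule span_subset_span_if_independent_card_ge[OF fB])
  then show ?thesis using linear_span_image[OF A, of B] spB unfolding M_def by simp
qed

lemma finite_compression_solvable:
  fixes Q S :: "'a::complex_inner \<Rightarrow> 'a"
  assumes Q: "is_orth_proj Q" and fr: "finite_rank Q" and S: "bounded_linear S" and c: "c > 0"
    and below: "\<And>x. x \<in> range Q \<Longrightarrow> c * norm x \<le> norm (Q (S x))"
  obtains v where "v \<in> range Q" "Q (S v) = Q y" "c * norm v \<le> norm y"
proof -
  have "range Q \<subseteq> (\<lambda>x. Q (S x)) ` range Q"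
  proof (rule finite_rank_inj_on_imp_surj_on[OF Q fr])
    show "linear (\<lambda>x. Q (S x))"
      using bounded_linear_compose[OF orth_proj_bounded_linear[OF Q] S] bounded_linear.linear by blast
    show "(\<lambda>x. Q (S x)) ` range Q \<subseteq> range Q" by auto
    show "x = 0" if "x \<in> range Q" "Q (S x) = 0" for x
      using below[OF that(1)] that(2) c by (simp add: mult_le_0_iff)
  qed
  then obtain v where v: "v \<in> range Q" "Q (S v) = Q y"
    using subsetD[OF _ rangeI[of Q y]] by (metis imageE)
  moreover have "c * norm v \<le> norm y"
    using below[OF v(1)] norm_orth_proj_le[OF Q, of y] v(2) by simp
  ultimately show ?thesis by (rule that)
qed

lemma bounded_linear_compression_shift:
  "is_orth_proj Q \<Longrightarrow> bounded_linear A \<Longrightarrow> bounded_linear (\<lambda>x. Q (A x) - z *\<^sub>C x)"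
  by (rule bounded_linear_sub[OF bounded_linear_compose[OF orth_proj_bounded_linear] bounded_linear_scaleC])

lemma resolvent_on_zero:
  assumes "resolvent_on M A z B" "x \<in> M"
  shows "B 0 = 0"
proof -
  have "B (0 *\<^sub>C x) = 0 *\<^sub>C B x" using assms unfolding resolvent_on_def by blast
  then show ?thesis by simp
qed

lemma norm_resolvent_on_div_le:
  assumes "resolvent_on M A z B" "y \<in> M" "y \<noteq> 0"
  shows "norm (B y) / norm y \<le> opnorm_on M B"
proof -
  obtain K where K: "\<And>x. x \<in> M \<Longrightarrow> norm (B x) \<le> K * norm x"
    using assms(1) unfolding resolvent_on_def by blast
  have "bdd_above ((\<lambda>x. norm (B x) / norm x) ` (M - {0}))"
    by (rule bdd_aboveI2[where M=K]) (simp add: K divide_le_eq)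
  then show ?thesis
    unfolding opnorm_on_def using assms(2,3) by (intro cSUP_upper) simp_all
qed

lemma norm_resolvent_on_le:
  assumes "resolvent_on M A z B" "y \<in> M"
  shows "norm (B y) \<le> opnorm_on M B * norm y"
proof (cases "y = 0")
  case True
  then show ?thesis using resolvent_on_zero[OF assms] by simp
next
  case False
  then show ?thesis using norm_resolvent_on_div_le[OF assms False] by (simp add: divide_le_eq)
qed

lemma Psi_on_eq_inverse_opnorm:
  assumes "z \<notin> spectrum_on M A"
  obtains B where "resolvent_on M A z B" "Psi_on M A z = inverse (opnorm_on M B)"
proof -
  have "\<exists>B. resolvent_on M A z B" using assms by (simp add: spectrum_on_def)
  then have "resolvent_on M A z (SOME B. resolvent_on M A z B)" by (rule someI_ex)
  moreover have "Psi_on M A z = inverse (opnorm_on M (SOME B. resolvent_on M A z B))"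
    using assms by (simp add: Psi_on_def)
  ultimately show ?thesis by (rule that)
qed

lemma Psi_on_nonneg:
  assumes "x0 \<in> M" "x0 \<noteq> 0"
  shows "0 \<le> Psi_on M A z"
proof (cases "z \<in> spectrum_on M A")
  case False
  then obtain B where B: "resolvent_on M A z B" "Psi_on M A z = inverse (opnorm_on M B)"
    by (rule Psi_on_eq_inverse_opnorm)
  have "0 \<le> opnorm_on M B"
    using norm_resolvent_on_div_le[OF B(1) assms] by (simp add: order_trans[rotated])
  then show ?thesis using B(2) by simp
qed (simp add: Psi_on_def)

lemma Psi_on_le_norm:
  assumes x: "x \<in> M" "norm x = 1" and Lx: "A x - z *\<^sub>C x \<in> M"
  shows "Psi_on M A z \<le> norm (A x - z *\<^sub>C x)"
proof (cases "z \<in> spectrum_on M A")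
  case False
  then obtain B where B: "resolvent_on M A z B" "Psi_on M A z = inverse (opnorm_on M B)"
    by (rule Psi_on_eq_inverse_opnorm)
  define w where "w = A x - z *\<^sub>C x"
  have Bw: "B w = x" using B(1) x(1) unfolding resolvent_on_def w_def by blast
  then have "w \<noteq> 0" using resolvent_on_zero[OF B(1) x(1)] x(2) by auto
  then have "1 / norm w \<le> opnorm_on M B"
    using norm_resolvent_on_div_le[OF B(1) Lx[folded w_def]] Bw x(2) by simp
  then have "inverse (opnorm_on M B) \<le> inverse (1 / norm w)"
    using \<open>w \<noteq> 0\<close> by (intro le_imp_inverse_le) simp_all
  then show ?thesis using B(2) by (simp add: w_def)
qed (simp add: Psi_on_def)

lemma Psi_on_resolvent_bound:
  assumes pos: "0 < Psi_on M A z"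
  obtains B where "resolvent_on M A z B" "\<And>w. w \<in> M \<Longrightarrow> Psi_on M A z * norm (B w) \<le> norm w"
proof -
  have "z \<notin> spectrum_on M A" using pos by (auto simp: Psi_on_def)
  then obtain B where B: "resolvent_on M A z B" "Psi_on M A z = inverse (opnorm_on M B)"
    by (rule Psi_on_eq_inverse_opnorm)
  have "opnorm_on M B > 0" using pos B(2) by simp
  have "Psi_on M A z * norm (B w) \<le> norm w" if "w \<in> M" for w
  proof -
    have "Psi_on M A z * norm (B w) = inverse (opnorm_on M B) * norm (B w)" using B(2) by simp
    also have "\<dots> \<le> inverse (opnorm_on M B) * (opnorm_on M B * norm w)"
      using \<open>opnorm_on M B > 0\<close> by (intro mult_left_mono norm_resolvent_on_le[OF B(1) that]) simp
    also have "\<dots> = norm w" using \<open>opnorm_on M B > 0\<close> by simp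
    finally show ?thesis .
  qed
  with B(1) show ?thesis by (rule that)
qed

lemma Psi_on_ge_if_bounded_below:
  assumes B0: "resolvent_on M A z B0" and c: "c > 0"
    and x0: "x0 \<in> M" "x0 \<noteq> 0" "A x0 - z *\<^sub>C x0 \<in> M"
    and below: "\<And>x. x \<in> M \<Longrightarrow> c * norm x \<le> norm (A x - z *\<^sub>C x)"
  shows "c \<le> Psi_on M A z"
proof -
  have "z \<notin> spectrum_on M A" using B0 unfolding spectrum_on_def by blast
  then obtain B where B: "resolvent_on M A z B" "Psi_on M A z = inverse (opnorm_on M B)"
    by (rule Psi_on_eq_inverse_opnorm)
  have op_le: "opnorm_on M B \<le> inverse c"
    unfolding opnorm_on_def
  proof (rule cSUP_least)
    show "M - {0} \<noteq> {}" using x0 by blast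
    fix y assume y: "y \<in> M - {0}"
    then have "B y \<in> M" "A (B y) - z *\<^sub>C B y = y" using B(1) unfolding resolvent_on_def by blast+
    then have "c * norm (B y) \<le> norm y" using below[of "B y"] by simp
    then show "norm (B y) / norm y \<le> inverse c" using c y by (simp add: field_simps)
  qed
  have op_pos: "opnorm_on M B > 0"
  proof -
    define y0 where "y0 = A x0 - z *\<^sub>C x0"
    have "B y0 = x0" using B(1) x0(1) unfolding resolvent_on_def y0_def by blast
    then have "y0 \<noteq> 0" using resolvent_on_zero[OF B(1) x0(1)] x0(2) by auto
    then have "0 < norm (B y0) / norm y0" using \<open>B y0 = x0\<close> x0(2) by simp
    then show ?thesis
      using norm_resolvent_on_div_le[OF B(1) x0(3)[folded y0_def] \<open>y0 \<noteq> 0\<close>] by linarith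
  qed
  show ?thesis using le_imp_inverse_le[OF op_le op_pos] B(2) by simp
qed

lemma inj_on_if_bounded_below:
  fixes L :: "'a::real_normed_vector \<Rightarrow> 'b::real_normed_vector"
  assumes L: "linear L" and M: "subspace M" and c: "c > 0"
    and below: "\<And>x. x \<in> M \<Longrightarrow> c * norm x \<le> norm (L x)"
  shows "inj_on L M"
proof (rule inj_onI)
  fix x y assume xy: "x \<in> M" "y \<in> M" "L x = L y"
  have "c * norm (x - y) \<le> norm (L (x - y))" by (rule below[OF subspace_diff[OF M xy(1,2)]])
  also have "L (x - y) = 0" using xy(3) by (simp add: linear_diff[OF L])
  finally show "x = y" using c by (simp add: mult_le_0_iff)
qed

lemma compression_resolvent_exists:
  fixes Q A :: "'a::complex_inner \<Rightarrow> 'a"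
  assumes Q: "is_orth_proj Q" and A: "bounded_clinear A" and c: "c > 0"
    and below: "\<And>x. x \<in> range Q \<Longrightarrow> c * norm x \<le> norm (Q (A x) - z *\<^sub>C x)"
    and onto: "range Q \<subseteq> (\<lambda>x. Q (A x) - z *\<^sub>C x) ` range Q"
  shows "\<exists>B. resolvent_on (range Q) (\<lambda>x. Q (A x)) z B"
proof -
  define L where "L x = Q (A x) - z *\<^sub>C x" for x
  have "bounded_linear A" using A by (simp add: bounded_clinear_def)
  then have L: "linear L"
    unfolding L_def by (rule bounded_linear.linear[OF bounded_linear_compression_shift[OF Q]])
  have L_scaleC: "L (a *\<^sub>C x) = a *\<^sub>C L x" for a x
    using A by (simp add: L_def bounded_clinear_def orth_proj_scaleC[OF Q] scaleC_diff_right scaleC_scaleC mult.commute)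
  have inj: "inj_on L (range Q)"
    using inj_on_if_bounded_below[OF L orth_proj_subspace[OF Q] c] below by (simp add: L_def)
  define B where "B = inv_into (range Q) L"
  have B: "B y \<in> range Q" "L (B y) = y" if "y \<in> range Q" for y
  proof -
    have y: "y \<in> L ` range Q" using subsetD[OF onto that] by (simp add: L_def)
    show "B y \<in> range Q" unfolding B_def using y by (rule inv_into_into)
    show "L (B y) = y" unfolding B_def using y by (rule f_inv_into_f)
  qed
  have BL: "B (L x) = x" if "x \<in> range Q" for x
    using inv_into_f_f[OF inj that] unfolding B_def .
  have "resolvent_on (range Q) (\<lambda>x. Q (A x)) z B"
    unfolding resolvent_on_def
  proof (intro conjI ballI allI)
    fix x y :: 'a and a :: complex assume x: "x \<in> range Q" and y: "y \<in> range Q"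
    have "B x + B y \<in> range Q" by (rule subspace_add[OF orth_proj_subspace[OF Q] B(1)[OF x] B(1)[OF y]])
    moreover have "L (B x + B y) = x + y" using B x y by (simp add: linear_add[OF L])
    ultimately show "B (x + y) = B x + B y" using BL[of "B x + B y"] by simp
    have "a *\<^sub>C B x \<in> range Q" using B(1)[OF x] by (rule orth_proj_range_scaleC[OF Q])
    moreover have "L (a *\<^sub>C B x) = a *\<^sub>C x" using B(2)[OF x] by (simp add: L_scaleC)
    ultimately show "B (a *\<^sub>C x) = a *\<^sub>C B x" using BL[of "a *\<^sub>C B x"] by simp
  next
    fix x assume x: "x \<in> range Q"
    show "B x \<in> range Q" "Q (A (B x)) - z *\<^sub>C B x = x" using B[OF x] by (simp_all add: L_def)
    show "B (Q (A x) - z *\<^sub>C x) = x" using BL[OF x] by (simp add: L_def)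
  next
    show "\<exists>K. \<forall>x\<in>range Q. norm (B x) \<le> K * norm x"
    proof (intro exI ballI)
      fix x assume "x \<in> range Q"
      then have "c * norm (B x) \<le> norm x" using below[OF B(1)] B(2) by (simp add: L_def)
      then show "norm (B x) \<le> inverse c * norm x" using c by (simp add: field_simps)
    qed
  qed
  then show ?thesis by blast
qed

section \<open>The minimum modulus\<close>

text \<open>Meaningful only when \<open>M\<close> contains a unit vector; otherwise it is the unspecified \<open>Inf {}\<close>.\<close>
definition min_modulus_on :: "'a::real_normed_vector set \<Rightarrow> ('a \<Rightarrow> 'b::real_normed_vector) \<Rightarrow> real" where
  "min_modulus_on M L = (INF x\<in>{x\<in>M. norm x = 1}. norm (L x))"

lemma min_modulus_on_le:
  assumes "x \<in> M" "norm x = 1"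
  shows "min_modulus_on M L \<le> norm (L x)"
  unfolding min_modulus_on_def
  by (rule cINF_lower[OF bdd_belowI2[where m=0]]) (use assms in auto)

lemma min_modulus_on_greatest:
  assumes "x \<in> M" "norm x = 1" and "\<And>x. x \<in> M \<Longrightarrow> norm x = 1 \<Longrightarrow> c \<le> norm (L x)"
  shows "c \<le> min_modulus_on M L"
  unfolding min_modulus_on_def by (rule cINF_greatest) (use assms in auto)

lemma min_modulus_on_nonneg: "x \<in> M \<Longrightarrow> norm x = 1 \<Longrightarrow> 0 \<le> min_modulus_on M L"
  by (rule min_modulus_on_greatest) auto

lemma min_modulus_on_mult_norm_le:
  assumes M: "subspace M" and L: "linear L" and x: "x \<in> M"
  shows "min_modulus_on M L * norm x \<le> norm (L x)"
proof (cases "x = 0")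
  case True
  then show ?thesis using linear_0[OF L] by simp
next
  case False
  define u where "u = (1 / norm x) *\<^sub>R x"
  have u: "u \<in> M" "norm u = 1"
    using subspace_scale[OF M x] False by (simp_all add: u_def)
  have "min_modulus_on M L \<le> norm (L u)" by (rule min_modulus_on_le[OF u])
  also have "norm (L u) = norm (L x) / norm x"
    using False by (simp add: u_def linear_scale[OF L])
  finally show ?thesis using False by (simp add: field_simps)
qed

lemma Psi_compression_le_min_modulus:
  fixes Q A :: "'a::complex_inner \<Rightarrow> 'a"
  assumes Q: "is_orth_proj Q" and ne: "range Q \<noteq> {0}"
  shows "Psi_on (range Q) (\<lambda>x. Q (A x)) z \<le> min_modulus_on (range Q) (\<lambda>x. Q (A x) - z *\<^sub>C x)"
proof -
  obtain u where u: "u \<in> range Q" "norm u = 1" by (rule orth_proj_range_unit[OF Q ne])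
  show ?thesis
  proof (rule min_modulus_on_greatest[OF u])
    fix x assume x: "x \<in> range Q" "norm x = 1"
    show "Psi_on (range Q) (\<lambda>x. Q (A x)) z \<le> norm (Q (A x) - z *\<^sub>C x)"
      using Psi_on_le_norm[where A="\<lambda>x. Q (A x)", OF x
          compression_shift_in_range[OF Q x(1), where A=A and z=z]]
      by simp
  qed
qed

lemma Psi_compression_eq_min_modulus:
  fixes Q A :: "'a::complex_inner \<Rightarrow> 'a"
  assumes Q: "is_orth_proj Q" and A: "bounded_clinear A" and ne: "range Q \<noteq> {0}"
    and onto: "0 < min_modulus_on (range Q) (\<lambda>x. Q (A x) - z *\<^sub>C x) \<Longrightarrow>
      range Q \<subseteq> (\<lambda>x. Q (A x) - z *\<^sub>C x) ` range Q"
  shows "Psi_on (range Q) (\<lambda>x. Q (A x)) z = min_modulus_on (range Q) (\<lambda>x. Q (A x) - z *\<^sub>C x)"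
    (is "?Psi = ?m")
proof (rule antisym)
  show "?Psi \<le> ?m" by (rule Psi_compression_le_min_modulus[OF Q ne])
  obtain u where u: "u \<in> range Q" "norm u = 1" by (rule orth_proj_range_unit[OF Q ne])
  show "?m \<le> ?Psi"
  proof (cases "0 < ?m")
    case False
    moreover have "0 \<le> ?Psi" using u by (intro Psi_on_nonneg) auto
    ultimately show ?thesis by linarith
  next
    case True
    have "bounded_linear A" using A by (simp add: bounded_clinear_def)
    then have "linear (\<lambda>x. Q (A x) - z *\<^sub>C x)"
      by (rule bounded_linear.linear[OF bounded_linear_compression_shift[OF Q]])
    then have below: "?m * norm x \<le> norm (Q (A x) - z *\<^sub>C x)" if "x \<in> range Q" for x
      using min_modulus_on_mult_norm_le[OF orth_proj_subspace[OF Q] _ that] by blast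
    obtain B where "resolvent_on (range Q) (\<lambda>x. Q (A x)) z B"
      using compression_resolvent_exists[OF Q A True below onto[OF True]] by blast
    moreover have "u \<noteq> 0" using u(2) by auto
    ultimately show ?thesis
      using Psi_on_ge_if_bounded_below[where A="\<lambda>x. Q (A x)", OF _ True u(1) _
          compression_shift_in_range[OF Q u(1), where A=A and z=z] below]
      by blast
  qed
qed

lemma Psi_finite_compression_eq_min_modulus:
  fixes Q A :: "'a::complex_inner \<Rightarrow> 'a"
  assumes Q: "is_orth_proj Q" and fr: "finite_rank Q" and A: "bounded_clinear A"
    and ne: "range Q \<noteq> {0}"
  shows "Psi_on (range Q) (\<lambda>x. Q (A x)) z = min_modulus_on (range Q) (\<lambda>x. Q (A x) - z *\<^sub>C x)"
proof (rule Psi_compression_eq_min_modulus[OF Q A ne])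
  assume pos: "0 < min_modulus_on (range Q) (\<lambda>x. Q (A x) - z *\<^sub>C x)"
  have "bounded_linear A" using A by (simp add: bounded_clinear_def)
  then have L: "linear (\<lambda>x. Q (A x) - z *\<^sub>C x)"
    by (rule bounded_linear.linear[OF bounded_linear_compression_shift[OF Q]])
  show "range Q \<subseteq> (\<lambda>x. Q (A x) - z *\<^sub>C x) ` range Q"
  proof (rule finite_rank_inj_on_imp_surj_on[OF Q fr L])
    show "(\<lambda>x. Q (A x) - z *\<^sub>C x) ` range Q \<subseteq> range Q"
      using compression_shift_in_range[OF Q] by blast
    fix x assume x: "x \<in> range Q" and "Q (A x) - z *\<^sub>C x = 0"
    then have "min_modulus_on (range Q) (\<lambda>x. Q (A x) - z *\<^sub>C x) * norm x \<le> 0"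
      using min_modulus_on_mult_norm_le[OF orth_proj_subspace[OF Q] L x] by simp
    then show "x = 0" using pos by (simp add: mult_le_0_iff)
  qed
qed

text \<open>A bounded right inverse of \<open>L\<close> makes its adjoint bounded below: for \<open>w = L (B w)\<close>,
  \<open>\<parallel>w\<parallel>\<^sup>2 = \<langle>B w, L' w\<rangle> \<le> K \<parallel>w\<parallel> \<parallel>L' w\<parallel>\<close>.\<close>
lemma norm_le_norm_adjoint_if_right_inverse:
  fixes L L' B :: "'a::complex_inner \<Rightarrow> 'a"
  assumes adj: "\<And>x y. x \<in> M \<Longrightarrow> y \<in> M \<Longrightarrow> cinner (L x) y = cinner x (L' y)"
    and B: "\<And>w. w \<in> M \<Longrightarrow> B w \<in> M \<and> L (B w) = w \<and> norm (B w) \<le> K * norm w"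
    and w: "w \<in> M" and K: "K \<ge> 0"
  shows "norm w \<le> K * norm (L' w)"
proof (cases "w = 0")
  case True
  then show ?thesis using K by simp
next
  case False
  have "(norm w)\<^sup>2 = Re (cinner (L (B w)) w)" using B[OF w] by (simp add: Re_cinner_self)
  also have "\<dots> = Re (cinner (B w) (L' w))" using adj[of "B w" w] B[OF w] w by simp
  also have "\<dots> \<le> cmod (cinner (B w) (L' w))" by (rule complex_Re_le_cmod)
  also have "\<dots> \<le> norm (B w) * norm (L' w)" by (rule cinner_Cauchy_Schwarz)
  also have "\<dots> \<le> K * norm w * norm (L' w)" using B[OF w] by (intro mult_right_mono) auto
  finally have "norm w * norm w \<le> (K * norm (L' w)) * norm w"
    by (simp add: power2_eq_square algebra_simps)
  then show ?thesis using False by simp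
qed

lemma Psi_compression_le_min_modulus_adjoint:
  fixes Q A A' :: "'a::complex_inner \<Rightarrow> 'a"
  assumes Q: "is_orth_proj Q" and ne: "range Q \<noteq> {0}"
    and adj: "\<And>x y. cinner (A x) y = cinner x (A' y)"
  shows "Psi_on (range Q) (\<lambda>x. Q (A x)) z \<le> min_modulus_on (range Q) (\<lambda>x. Q (A' x) - cnj z *\<^sub>C x)"
    (is "?Psi \<le> ?m")
proof -
  obtain u where u: "u \<in> range Q" "norm u = 1" by (rule orth_proj_range_unit[OF Q ne])
  show ?thesis
  proof (cases "0 < ?Psi")
    case False
    then show ?thesis using min_modulus_on_nonneg[OF u, of "\<lambda>x. Q (A' x) - cnj z *\<^sub>C x"] by linarith
  next
    case True
    obtain B where B: "resolvent_on (range Q) (\<lambda>x. Q (A x)) z B"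
      and B_bound: "\<And>w. w \<in> range Q \<Longrightarrow> ?Psi * norm (B w) \<le> norm w"
      using Psi_on_resolvent_bound[OF True] by blast
    show ?thesis
    proof (rule min_modulus_on_greatest[OF u])
      fix w assume w: "w \<in> range Q" "norm w = 1"
      have "norm w \<le> inverse ?Psi * norm (Q (A' w) - cnj z *\<^sub>C w)"
      proof (rule norm_le_norm_adjoint_if_right_inverse[where L="\<lambda>x. Q (A x) - z *\<^sub>C x" and M="range Q"])
        show "cinner (Q (A x) - z *\<^sub>C x) y = cinner x (Q (A' y) - cnj z *\<^sub>C y)"
          if "x \<in> range Q" "y \<in> range Q" for x y
          by (rule cinner_compression_shift[OF Q adj that])
        show "B v \<in> range Q \<and> Q (A (B v)) - z *\<^sub>C B v = v \<and> norm (B v) \<le> inverse ?Psi * norm v"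
          if "v \<in> range Q" for v
        proof -
          have "B v \<in> range Q" "Q (A (B v)) - z *\<^sub>C B v = v"
            using B that unfolding resolvent_on_def by blast+
          moreover have "norm (B v) \<le> inverse ?Psi * norm v"
            using B_bound[OF that] True by (simp add: field_simps)
          ultimately show ?thesis by blast
        qed
      qed (use w True in simp_all)
      then show "?Psi \<le> norm (Q (A' w) - cnj z *\<^sub>C w)" using w(2) True by (simp add: field_simps)
    qed
  qed
qed

lemma Psi_finite_compression_eq_min_modulus_adjoint:
  fixes Q A A' :: "'a::complex_inner \<Rightarrow> 'a"
  assumes Q: "is_orth_proj Q" and fr: "finite_rank Q"
    and A: "bounded_clinear A" and A': "bounded_clinear A'"
    and adj: "\<And>x y. cinner (A x) y = cinner x (A' y)" and ne: "range Q \<noteq> {0}"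
  shows "Psi_on (range Q) (\<lambda>x. Q (A x)) z = min_modulus_on (range Q) (\<lambda>x. Q (A' x) - cnj z *\<^sub>C x)"
proof (rule antisym)
  show "Psi_on (range Q) (\<lambda>x. Q (A x)) z \<le> min_modulus_on (range Q) (\<lambda>x. Q (A' x) - cnj z *\<^sub>C x)"
    by (rule Psi_compression_le_min_modulus_adjoint[OF Q ne adj])
  have adj': "cinner (A' x) y = cinner x (A y)" for x y
    using cinner_commute[of "A' x" y] cinner_commute[of x "A y"] adj[of y x] by simp
  have "min_modulus_on (range Q) (\<lambda>x. Q (A' x) - cnj z *\<^sub>C x) = Psi_on (range Q) (\<lambda>x. Q (A' x)) (cnj z)"
    by (rule Psi_finite_compression_eq_min_modulus[OF Q fr A' ne, symmetric])
  also have "\<dots> \<le> min_modulus_on (range Q) (\<lambda>x. Q (A x) - cnj (cnj z) *\<^sub>C x)"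
    by (rule Psi_compression_le_min_modulus_adjoint[OF Q ne adj'])
  also have "\<dots> = Psi_on (range Q) (\<lambda>x. Q (A x)) z"
    using Psi_finite_compression_eq_min_modulus[OF Q fr A ne] by simp
  finally show "min_modulus_on (range Q) (\<lambda>x. Q (A' x) - cnj z *\<^sub>C x) \<le> Psi_on (range Q) (\<lambda>x. Q (A x)) z" .
qed

section \<open>Riesz representation and adjoints\<close>

lemma parallelogram_law:
  "(norm (a + b::'a::complex_inner))\<^sup>2 + (norm (a - b))\<^sup>2 = 2 * (norm a)\<^sup>2 + 2 * (norm b)\<^sup>2"
  by (simp add: norm_add_sq norm_diff_sq)

lemma cinner_eq_zero_if_norm_le_diff_scaleC:
  fixes e k :: "'a::complex_inner"
  assumes min: "\<And>t. norm e \<le> norm (e - t *\<^sub>C k)"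
  shows "cinner e k = 0"
proof (cases "k = 0")
  case False
  obtain t where "(norm (e - t *\<^sub>C k))\<^sup>2 = (norm e)\<^sup>2 - (cmod (cinner e k))\<^sup>2 / (norm k)\<^sup>2"
    using norm_diff_scaleC_optimal[OF False] by blast
  moreover have "(norm e)\<^sup>2 \<le> (norm (e - t *\<^sub>C k))\<^sup>2" using min[of t] by (simp add: power_mono)
  ultimately have "(cmod (cinner e k))\<^sup>2 / (norm k)\<^sup>2 \<le> 0" by simp
  then show ?thesis using False by (simp add: divide_le_0_iff)
qed simp

lemma Cauchy_if_norm_diff_sq_le:
  fixes f :: "nat \<Rightarrow> 'a::real_normed_vector"
  assumes dist_sq: "\<And>m n. (norm (f m - f n))\<^sup>2 \<le> 2 / (real m + 1) + 2 / (real n + 1)"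
  shows "Cauchy f"
proof (rule CauchyI)
  fix e :: real assume e: "e > 0"
  obtain N :: nat where N: "4 / e\<^sup>2 < real N" using reals_Archimedean2 by blast
  have e2: "e\<^sup>2 > 0" using e by simp
  have "4 < e\<^sup>2 * real N" using N e2 by (simp add: divide_less_eq mult.commute)
  also have "\<dots> \<le> e\<^sup>2 * (real N + 1)" using e2 by simp
  finally have N': "4 / (real N + 1) < e\<^sup>2" by (simp add: divide_less_eq mult.commute)
  show "\<exists>M. \<forall>m\<ge>M. \<forall>n\<ge>M. norm (f m - f n) < e"
  proof (intro exI allI impI)
    fix m n assume "m \<ge> N" "n \<ge> N"
    then have "2 / (real m + 1) \<le> 2 / (real N + 1)" "2 / (real n + 1) \<le> 2 / (real N + 1)"
      by (auto intro!: divide_left_mono)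
    then have "(norm (f m - f n))\<^sup>2 < e\<^sup>2" using dist_sq[of m n] N' by simp
    then show "norm (f m - f n) < e" using e by (simp add: power_less_imp_less_base)
  qed
qed

lemma nearest_point_exists:
  fixes K :: "'a::chilbert_space set"
  assumes K: "closed K" "K \<noteq> {}"
    and midpoint: "\<And>x y. x \<in> K \<Longrightarrow> y \<in> K \<Longrightarrow> (1/2::complex) *\<^sub>C (x + y) \<in> K"
  obtains k where "k \<in> K" "\<And>k'. k' \<in> K \<Longrightarrow> norm (u - k) \<le> norm (u - k')"
proof -
  define d where "d = (INF k\<in>K. (norm (u - k))\<^sup>2)"
  have bdd: "bdd_below ((\<lambda>k. (norm (u - k))\<^sup>2) ` K)" by (rule bdd_belowI2[where m=0]) simp
  have d_le: "d \<le> (norm (u - k))\<^sup>2" if "k \<in> K" for k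
    unfolding d_def using bdd that by (rule cINF_lower)
  have "\<exists>k. k \<in> K \<and> (norm (u - k))\<^sup>2 < d + 1 / (real n + 1)" for n
  proof -
    have "d < d + 1 / (real n + 1)" by simp
    then show ?thesis unfolding d_def using cINF_less_iff[OF K(2) bdd] by blast
  qed
  then have "\<exists>ks. \<forall>n. ks n \<in> K \<and> (norm (u - ks n))\<^sup>2 < d + 1 / (real n + 1)"
    by (intro choice allI)
  then obtain ks where ks: "\<And>n. ks n \<in> K" "\<And>n. (norm (u - ks n))\<^sup>2 < d + 1 / (real n + 1)"
    by blast
  txt \<open>The parallelogram law at the midpoint bounds the distances within a minimizing sequence.\<close>
  have "(norm (ks m - ks n))\<^sup>2 \<le> 2 / (real m + 1) + 2 / (real n + 1)" for m n
  proof -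
    define mid where "mid = (1/2::complex) *\<^sub>C (ks m + ks n)"
    have "2 *\<^sub>R mid = ks m + ks n"
      unfolding mid_def by (simp add: scaleR_scaleC scaleC_scaleC scaleC_one)
    then have "(u - ks m) + (u - ks n) = 2 *\<^sub>R (u - mid)" by (simp add: algebra_simps scaleR_2)
    then have "(norm ((u - ks m) + (u - ks n)))\<^sup>2 = 4 * (norm (u - mid))\<^sup>2"
      by (simp add: power_mult_distrib)
    moreover have "d \<le> (norm (u - mid))\<^sup>2" unfolding mid_def by (intro d_le midpoint ks)
    ultimately have "(norm (ks n - ks m))\<^sup>2 \<le> 2 * (norm (u - ks m))\<^sup>2 + 2 * (norm (u - ks n))\<^sup>2 - 4 * d"
      using parallelogram_law[of "u - ks m" "u - ks n"] by simp
    also have "\<dots> \<le> 2 / (real m + 1) + 2 / (real n + 1)" using ks(2)[of m] ks(2)[of n] by simp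
    finally show ?thesis by (simp add: norm_minus_commute)
  qed
  then have "Cauchy ks" by (rule Cauchy_if_norm_diff_sq_le)
  then obtain k where k: "ks \<longlonglongrightarrow> k" using Cauchy_convergent_iff convergent_def by blast
  have kK: "k \<in> K" using closed_sequentially[OF K(1)] ks(1) k by blast
  have kd: "(norm (u - k))\<^sup>2 \<le> d"
  proof (rule tendsto_le[OF trivial_limit_sequentially])
    show "(\<lambda>n. d + 1 / (real n + 1)) \<longlonglongrightarrow> d"
      using LIMSEQ_inverse_real_of_nat_add[of d] by (simp add: inverse_eq_divide add.commute)
    show "(\<lambda>n. (norm (u - ks n))\<^sup>2) \<longlonglongrightarrow> (norm (u - k))\<^sup>2" by (intro tendsto_intros k)
    show "\<forall>\<^sub>F n in sequentially. (norm (u - ks n))\<^sup>2 \<le> d + 1 / (real n + 1)"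
      using ks(2) less_imp_le by (intro always_eventually) blast
  qed
  show ?thesis
  proof (rule that[OF kK])
    fix k' assume "k' \<in> K"
    with kd d_le have "(norm (u - k))\<^sup>2 \<le> (norm (u - k'))\<^sup>2" by (blast intro: order_trans)
    then show "norm (u - k) \<le> norm (u - k')" by (rule power2_le_imp_le) simp
  qed
qed

lemma closed_subspace_orthogonal_decomposition:
  fixes K :: "'a::chilbert_space set"
  assumes K: "closed K" "0 \<in> K"
    and add: "\<And>x y. x \<in> K \<Longrightarrow> y \<in> K \<Longrightarrow> x + y \<in> K"
    and scale: "\<And>c x. x \<in> K \<Longrightarrow> c *\<^sub>C x \<in> K"
  obtains k where "k \<in> K" "\<And>k'. k' \<in> K \<Longrightarrow> cinner (u - k) k' = 0"
proof -
  obtain k where k: "k \<in> K" "\<And>k'. k' \<in> K \<Longrightarrow> norm (u - k) \<le> norm (u - k')"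
    using nearest_point_exists[OF K(1) _ scale[OF add]] K(2) by blast
  have "cinner (u - k) k' = 0" if "k' \<in> K" for k'
  proof (rule cinner_eq_zero_if_norm_le_diff_scaleC)
    fix t
    have "k + t *\<^sub>C k' \<in> K" using add scale k(1) that by blast
    then show "norm (u - k) \<le> norm (u - k - t *\<^sub>C k')" using k(2) by (simp add: algebra_simps)
  qed
  with k(1) show ?thesis by (rule that)
qed

lemma cinner_eqI_left:
  assumes "\<And>u. cinner a u = cinner (b::'a::complex_inner) u"
  shows "a = b"
proof (rule cinner_eqI)
  show "cinner x a = cinner x b" for x
    using assms[of x] cinner_commute[of x a] cinner_commute[of x b] by simp
qed

lemma bounded_linear_cinner_right_comp:
  assumes T: "bounded_linear (T::'a::complex_inner \<Rightarrow> 'b::complex_inner)"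
  shows "bounded_linear (\<lambda>x. cinner y (T x))"
proof (rule bounded_linear_intro[where K="norm y * onorm T"])
  show "cinner y (T (a + b)) = cinner y (T a) + cinner y (T b)" for a b
    by (simp add: linear_add[OF bounded_linear.linear[OF T]] cinner_add_right)
  show "cinner y (T (r *\<^sub>R a)) = r *\<^sub>R cinner y (T a)" for r a
    by (simp add: linear_scale[OF bounded_linear.linear[OF T]] cinner_scaleR_right scaleR_conv_of_real)
  show "norm (cinner y (T a)) \<le> norm a * (norm y * onorm T)" for a
  proof -
    have "norm (cinner y (T a)) \<le> norm y * norm (T a)" by (rule cinner_Cauchy_Schwarz)
    also have "\<dots> \<le> norm y * (onorm T * norm a)" by (intro mult_left_mono onorm[OF T]) simp
    finally show ?thesis by (simp add: algebra_simps)
  qed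
qed

text \<open>The representing vector is a multiple of a vector orthogonal to the kernel.\<close>
lemma riesz_representation:
  fixes f :: "'a::chilbert_space \<Rightarrow> complex"
  assumes f: "bounded_linear f" and f_scaleC: "\<And>c x. f (c *\<^sub>C x) = c * f x"
  shows "\<exists>v. \<forall>x. f x = cinner v x"
proof (cases "\<forall>x. f x = 0")
  case True
  then show ?thesis by (intro exI[of _ 0]) simp
next
  case False
  then obtain u0 where u0: "f u0 \<noteq> 0" by blast
  define K where "K = {x. f x = 0}"
  have lin: "linear f" by (rule bounded_linear.linear[OF f])
  obtain k where k: "k \<in> K" "\<And>k'. k' \<in> K \<Longrightarrow> cinner (u0 - k) k' = 0"
  proof (rule closed_subspace_orthogonal_decomposition[where u=u0])
    show "closed K" unfolding K_def
      by (intro closed_Collect_eq continuous_on_const linear_continuous_on f)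
    show "0 \<in> K" by (simp add: K_def linear_0[OF lin])
    show "x + y \<in> K" if "x \<in> K" "y \<in> K" for x y using that by (simp add: K_def linear_add[OF lin])
    show "c *\<^sub>C x \<in> K" if "x \<in> K" for c x using that by (simp add: K_def f_scaleC)
  qed (rule that)
  define e where "e = u0 - k"
  have fe: "f e = f u0" using k(1) by (simp add: e_def K_def linear_diff[OF lin])
  have e0: "e \<noteq> 0" using fe u0 linear_0[OF lin] by auto
  show ?thesis
  proof (intro exI allI)
    fix x
    define q where "q = f x / f e"
    have "f (x - q *\<^sub>C e) = 0" using u0 fe by (simp add: q_def linear_diff[OF lin] f_scaleC)
    then have "cinner e (x - q *\<^sub>C e) = 0" using k(2) unfolding K_def e_def by blast
    then have ex: "cinner e x = q * complex_of_real ((norm e)\<^sup>2)"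
      by (simp add: cinner_diff_right cinner_scaleC_right cinner_self_norm)
    have n0: "complex_of_real ((norm e)\<^sup>2) \<noteq> 0" using e0 by simp
    have "cinner ((cnj (f e) / complex_of_real ((norm e)\<^sup>2)) *\<^sub>C e) x
        = f e / complex_of_real ((norm e)\<^sup>2) * cinner e x"
      by (simp add: cinner_scaleC_left)
    also have "\<dots> = f x" using n0 u0 fe by (simp add: ex q_def)
    finally show "f x = cinner ((cnj (f e) / complex_of_real ((norm e)\<^sup>2)) *\<^sub>C e) x" by simp
  qed
qed

lemma cinner_adj:
  fixes T :: "'a::chilbert_space \<Rightarrow> 'a"
  assumes T: "bounded_clinear T"
  shows "cinner (T x) y = cinner x (adj T y)"
proof -
  have T_bl: "bounded_linear T" using T by (simp add: bounded_clinear_def)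
  have "cinner y (T (c *\<^sub>C x)) = c * cinner y (T x)" for c x
    using T by (simp add: bounded_clinear_def cinner_scaleC_right)
  then obtain v where v: "\<And>x. cinner y (T x) = cinner v x"
    using riesz_representation[OF bounded_linear_cinner_right_comp[OF T_bl]] by blast
  have v': "cinner (T x) y = cinner x v" for x
    using v[of x] cinner_commute[of "T x" y] cinner_commute[of x v] by simp
  have "\<exists>!z. \<forall>x. cinner (T x) y = cinner x z"
  proof (rule ex1I[of _ v])
    show "\<forall>x. cinner (T x) y = cinner x v" using v' by blast
    show "z = v" if "\<forall>x. cinner (T x) y = cinner x z" for z
      using that v' by (intro cinner_eqI) simp
  qed
  then have "\<forall>x. cinner (T x) y = cinner x (adj T y)"
    unfolding adj_def by (rule theI')
  then show ?thesis by blast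
qed

lemma bounded_clinear_adj:
  fixes T :: "'a::chilbert_space \<Rightarrow> 'a"
  assumes T: "bounded_clinear T"
  shows "bounded_clinear (adj T)"
proof -
  define S where "S = adj T"
  have ST: "cinner (T x) y = cinner x (S y)" for x y unfolding S_def by (rule cinner_adj[OF T])
  have T_bl: "bounded_linear T" using T by (simp add: bounded_clinear_def)
  have add: "S (a + b) = S a + S b" for a b
    by (rule cinner_eqI) (simp add: ST[symmetric] cinner_add_right)
  have scale: "S (c *\<^sub>C a) = c *\<^sub>C S a" for c a
    by (rule cinner_eqI) (simp add: ST[symmetric] cinner_scaleC_right)
  have bound: "norm (S a) \<le> norm a * onorm T" for a
  proof (cases "S a = 0")
    case True
    then show ?thesis using onorm_pos_le[OF T_bl] by simp
  next
    case False
    have "(norm (S a))\<^sup>2 = Re (cinner (T (S a)) a)" by (simp add: Re_cinner_self ST)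
    also have "\<dots> \<le> cmod (cinner (T (S a)) a)" by (rule complex_Re_le_cmod)
    also have "\<dots> \<le> norm (T (S a)) * norm a" by (rule cinner_Cauchy_Schwarz)
    also have "\<dots> \<le> onorm T * norm (S a) * norm a" by (intro mult_right_mono onorm[OF T_bl]) simp
    finally have "norm (S a) * norm (S a) \<le> (norm a * onorm T) * norm (S a)"
      by (simp add: power2_eq_square algebra_simps)
    then show ?thesis using False by simp
  qed
  have "bounded_linear S"
    by (rule bounded_linear_intro[where K="onorm T"]) (simp_all add: add bound scaleR_scaleC scale)
  then show ?thesis unfolding bounded_clinear_def S_def using scale S_def by blast
qed

lemma resolvent_on_UNIV_bounded_clinear:
  assumes "resolvent_on UNIV A z B"
  shows "bounded_clinear B"
proof -
  obtain K where K: "\<And>x. norm (B x) \<le> K * norm x"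
    and add: "\<And>x y. B (x + y) = B x + B y" and scale: "\<And>c x. B (c *\<^sub>C x) = c *\<^sub>C B x"
    using assms unfolding resolvent_on_def by blast
  have "bounded_linear B"
    by (rule bounded_linear_intro[where K=K]) (simp_all add: add scaleR_scaleC scale K mult.commute)
  then show ?thesis unfolding bounded_clinear_def using scale by blast
qed

text \<open>The functional \<open>u \<mapsto> \<langle>y, C u\<rangle>\<close> is represented by a preimage of \<open>y\<close> under \<open>A\<close>.\<close>
lemma surj_if_adjoint_left_invertible:
  fixes A A' C :: "'a::chilbert_space \<Rightarrow> 'a"
  assumes adj: "\<And>x y. cinner (A x) y = cinner x (A' y)"
    and C: "bounded_clinear C" and left_inv: "\<And>u. C (A' u) = u"
  shows "surj A"
proof -
  have "y \<in> range A" for y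
  proof -
    have C_bl: "bounded_linear C" using C by (simp add: bounded_clinear_def)
    have "cinner y (C (c *\<^sub>C u)) = c * cinner y (C u)" for c u
      using C by (simp add: bounded_clinear_def cinner_scaleC_right)
    then obtain v where v: "\<And>u. cinner y (C u) = cinner v u"
      using riesz_representation[OF bounded_linear_cinner_right_comp[OF C_bl]] by blast
    have "A v = y"
    proof (rule cinner_eqI_left)
      fix u
      have "cinner (A v) u = cinner y (C (A' u))" by (simp add: adj v)
      then show "cinner (A v) u = cinner y u" by (simp add: left_inv)
    qed
    then show ?thesis by blast
  qed
  then show ?thesis by blast
qed

section \<open>Operators with asymptotically small off-diagonal part\<close>

lemma closed_range_if_bounded_below:
  fixes S :: "'a::{real_normed_vector, complete_space} \<Rightarrow> 'b::real_normed_vector"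
  assumes S: "bounded_linear S" and c: "c > 0" and below: "\<And>x. c * norm x \<le> norm (S x)"
  shows "closed (range S)"
  unfolding closed_sequential_limits
proof (intro allI impI, elim conjE)
  fix f l assume f: "\<forall>n. f n \<in> range S" and l: "f \<longlonglongrightarrow> l"
  have "\<forall>n. \<exists>x. f n = S x" using f by blast
  then obtain v where v: "\<And>n. f n = S (v n)" by (metis choice)
  have "Cauchy v"
  proof (rule CauchyI)
    fix e :: real assume e: "e > 0"
    obtain M where M: "\<And>m n. m \<ge> M \<Longrightarrow> n \<ge> M \<Longrightarrow> norm (f m - f n) < e * c"
      using CauchyD[OF LIMSEQ_imp_Cauchy[OF l], of "e * c"] e c by auto
    show "\<exists>M. \<forall>m\<ge>M. \<forall>n\<ge>M. norm (v m - v n) < e"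
    proof (intro exI allI impI)
      fix m n assume "m \<ge> M" "n \<ge> M"
      have "c * norm (v m - v n) \<le> norm (S (v m - v n))" by (rule below)
      also have "S (v m - v n) = f m - f n" by (simp add: v linear_diff[OF bounded_linear.linear[OF S]])
      finally have "c * norm (v m - v n) < c * e"
        using M[OF \<open>m \<ge> M\<close> \<open>n \<ge> M\<close>] by (simp add: mult.commute)
      then show "norm (v m - v n) < e" using c by simp
    qed
  qed
  then obtain x where "v \<longlonglongrightarrow> x" using Cauchy_convergent_iff convergent_def by blast
  then have "f \<longlonglongrightarrow> S x" unfolding v by (rule bounded_linear.tendsto[OF S])
  with l have "l = S x" by (rule LIMSEQ_unique)
  then show "l \<in> range S" by simp
qed

text \<open>The finite section \<open>Q S Q\<close> inherits the lower bound up to \<open>\<parallel>(I - Q) S Q\<parallel>\<close>; solving it for \<open>Q y\<close>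
  gives \<open>\<parallel>S v - y\<parallel> \<le> \<parallel>(I - Q) S Q\<parallel> \<parallel>v\<parallel> + \<parallel>Q y - y\<parallel>\<close>.\<close>
lemma finite_section_approx_solution:
  fixes Q S :: "'a::complex_inner \<Rightarrow> 'a"
  assumes Q: "is_orth_proj Q" and fr: "finite_rank Q" and S: "bounded_linear S" and c: "c > 0"
    and below: "\<And>x. c * norm x \<le> norm (S x)" and small: "onorm (offdiag Q S) < c / 2"
  obtains v where "norm (S v - y) \<le> onorm (offdiag Q S) * (2 / c * norm y) + norm (Q y - y)"
proof -
  have "c / 2 * norm x \<le> norm (Q (S x))" if "x \<in> range Q" for x
  proof -
    have "c / 2 * norm x \<le> (c - onorm (offdiag Q S)) * norm x"
      using small by (intro mult_right_mono) simp_all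
    also have "\<dots> \<le> norm (S x) - onorm (offdiag Q S) * norm x"
      using below[of x] by (simp add: left_diff_distrib)
    also have "\<dots> \<le> norm (Q (S x))"
      using norm_compression_shift_ge[OF Q S that, of 0] by simp
    finally show ?thesis .
  qed
  moreover have "c / 2 > 0" using c by simp
  ultimately obtain v where v: "v \<in> range Q" "Q (S v) = Q y" "c / 2 * norm v \<le> norm y"
    using finite_compression_solvable[OF Q fr S] by blast
  have "norm (S v - y) \<le> norm (S v - Q (S v)) + norm (Q y - y)"
    using norm_triangle_ineq[of "S v - Q (S v)" "Q y - y"] v(2) by simp
  also have "norm (S v - Q (S v)) \<le> onorm (offdiag Q S) * (2 / c * norm y)"
  proof (rule order_trans[OF norm_offdiag_le[OF Q S v(1)]])
    show "onorm (offdiag Q S) * norm v \<le> onorm (offdiag Q S) * (2 / c * norm y)"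
      using v(3) c onorm_pos_le[OF bounded_linear_offdiag[OF Q S]]
      by (intro mult_left_mono) (simp_all add: field_simps)
  qed
  finally have "norm (S v - y) \<le> onorm (offdiag Q S) * (2 / c * norm y) + norm (Q y - y)" by simp
  then show ?thesis by (rule that)
qed

lemma surj_if_bounded_below_offdiag_tendsto_0:
  fixes S :: "'a::chilbert_space \<Rightarrow> 'a"
  assumes S: "bounded_linear S" and P: "filtration P"
    and offdiag: "(\<lambda>n. onorm (offdiag (P n) S)) \<longlonglongrightarrow> 0"
    and c: "c > 0" and below: "\<And>x. c * norm x \<le> norm (S x)"
  shows "surj S"
proof -
  have "y \<in> closure (range S)" for y
    unfolding closure_approachable
  proof (intro allI impI)
    fix e :: real assume e: "e > 0"
    have "(\<lambda>n. onorm (offdiag (P n) S) * (2 / c * norm y) + norm (P n y - y)) \<longlonglongrightarrow> 0 * (2 / c * norm y) + 0"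
      using filtration_tendsto[OF P, of y]
      by (intro tendsto_add tendsto_mult offdiag tendsto_const tendsto_norm_zero)
        (simp add: LIM_zero_iff)
    then have "\<forall>\<^sub>F n in sequentially. onorm (offdiag (P n) S) * (2 / c * norm y) + norm (P n y - y) < e"
      using e by (auto dest: order_tendstoD(2))
    moreover have "\<forall>\<^sub>F n in sequentially. onorm (offdiag (P n) S) < c / 2"
      using c by (intro order_tendstoD(2)[OF offdiag]) simp
    ultimately have "\<forall>\<^sub>F n in sequentially. onorm (offdiag (P n) S) * (2 / c * norm y) + norm (P n y - y) < e
        \<and> onorm (offdiag (P n) S) < c / 2"
      by (rule eventually_conj)
    then obtain n where n: "onorm (offdiag (P n) S) * (2 / c * norm y) + norm (P n y - y) < e"
      "onorm (offdiag (P n) S) < c / 2"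
      unfolding eventually_sequentially by blast
    obtain v where "norm (S v - y) \<le> onorm (offdiag (P n) S) * (2 / c * norm y) + norm (P n y - y)"
      by (rule finite_section_approx_solution[OF filtration_orth_proj[OF P] filtration_finite_rank[OF P] S c below n(2)])
    then have "dist (S v) y < e" using n(1) by (simp add: dist_norm)
    then show "\<exists>x\<in>range S. dist x y < e" by blast
  qed
  moreover have "closure (range S) = range S"
    by (rule closure_closed[OF closed_range_if_bounded_below[OF S c below]])
  ultimately show ?thesis by blast
qed

lemma Psi_eq_min_modulus_if_offdiag_tendsto_0:
  fixes T :: "'a::chilbert_space \<Rightarrow> 'a"
  assumes T: "bounded_clinear T" and P: "filtration P"
    and offdiag: "(\<lambda>n. onorm (offdiag (P n) T)) \<longlonglongrightarrow> 0" and ne: "(UNIV :: 'a set) \<noteq> {0}"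
  shows "Psi T z = min_modulus_on UNIV (\<lambda>x. T x - z *\<^sub>C x)"
proof -
  have "Psi_on (range id) (\<lambda>x. id (T x)) z = min_modulus_on (range id) (\<lambda>x. id (T x) - z *\<^sub>C x)"
  proof (rule Psi_compression_eq_min_modulus[OF is_orth_proj_id T])
    show "range (id :: 'a \<Rightarrow> 'a) \<noteq> {0}" using ne by simp
    assume pos: "0 < min_modulus_on (range id) (\<lambda>x. id (T x) - z *\<^sub>C x)"
    have L: "bounded_linear (\<lambda>x. T x - z *\<^sub>C x)"
      using T by (simp add: bounded_clinear_def bounded_linear_sub bounded_linear_scaleC)
    have "min_modulus_on UNIV (\<lambda>x. T x - z *\<^sub>C x) * norm x \<le> norm (T x - z *\<^sub>C x)" for x
      by (rule min_modulus_on_mult_norm_le[OF subspace_UNIV bounded_linear.linear[OF L]]) simp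
    moreover have "offdiag (P n) (\<lambda>x. T x - z *\<^sub>C x) = offdiag (P n) T" for n
      by (rule offdiag_shift[OF filtration_orth_proj[OF P]])
    ultimately have "surj (\<lambda>x. T x - z *\<^sub>C x)"
      using surj_if_bounded_below_offdiag_tendsto_0[OF L P _ pos] offdiag by simp
    then show "range id \<subseteq> (\<lambda>x. id (T x) - z *\<^sub>C x) ` range id" by simp
  qed
  then show ?thesis by simp
qed

lemma Psi_eq_min_modulus_adjoint_if_offdiag_tendsto_0:
  fixes T :: "'a::chilbert_space \<Rightarrow> 'a"
  assumes T: "bounded_clinear T" and P: "filtration P"
    and offdiag: "(\<lambda>n. onorm (offdiag (P n) (adj T))) \<longlonglongrightarrow> 0" and ne: "(UNIV :: 'a set) \<noteq> {0}"
  shows "Psi T z = min_modulus_on UNIV (\<lambda>x. adj T x - cnj z *\<^sub>C x)" (is "_ = ?m")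
proof (rule antisym)
  define S where "S = adj T"
  have S: "bounded_clinear S" unfolding S_def by (rule bounded_clinear_adj[OF T])
  have TS: "cinner (T x) y = cinner x (S y)" for x y unfolding S_def by (rule cinner_adj[OF T])
  have ST: "cinner (S x) y = cinner x (T y)" for x y
    using cinner_commute[of "S x" y] cinner_commute[of x "T y"] TS[of y x] by simp
  have ne': "range (id :: 'a \<Rightarrow> 'a) \<noteq> {0}" using ne by simp
  show "Psi T z \<le> ?m"
    using Psi_compression_le_min_modulus_adjoint[OF is_orth_proj_id ne' TS, of z] by (simp add: S_def)
  show "?m \<le> Psi T z"
  proof (cases "0 < ?m")
    case False
    obtain u :: 'a where "norm u = 1" using orth_proj_range_unit[OF is_orth_proj_id ne'] by blast
    then have "0 \<le> Psi T z" by (intro Psi_on_nonneg[of u]) auto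
    with False show ?thesis by linarith
  next
    case True
    have "Psi S (cnj z) = ?m"
      using Psi_eq_min_modulus_if_offdiag_tendsto_0[OF S P _ ne] offdiag by (simp add: S_def)
    then obtain C where C: "resolvent_on UNIV S (cnj z) C"
      using Psi_on_resolvent_bound True by metis
    have "surj (\<lambda>x. T x - z *\<^sub>C x)"
    proof (rule surj_if_adjoint_left_invertible)
      show "cinner (T x - z *\<^sub>C x) y = cinner x (S y - cnj z *\<^sub>C y)" for x y
        using cinner_compression_shift[OF is_orth_proj_id TS, of x y z] by simp
      show "bounded_clinear C" by (rule resolvent_on_UNIV_bounded_clinear[OF C])
      show "C (S u - cnj z *\<^sub>C u) = u" for u using C unfolding resolvent_on_def by blast
    qed
    then have "Psi T z = min_modulus_on UNIV (\<lambda>x. T x - z *\<^sub>C x)"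
      using Psi_compression_eq_min_modulus[OF is_orth_proj_id T ne', of z] by simp
    moreover have "Psi S (cnj z) \<le> min_modulus_on UNIV (\<lambda>x. T x - z *\<^sub>C x)"
      using Psi_compression_le_min_modulus_adjoint[OF is_orth_proj_id ne' ST, of "cnj z"] by simp
    ultimately show ?thesis using \<open>Psi S (cnj z) = ?m\<close> by simp
  qed
qed

section \<open>Uniform convergence of finite sections\<close>

lemma eventually_cover_compact:
  fixes K :: "'b::metric_space set"
  assumes K: "compact K" and \<rho>: "\<rho> > 0"
    and ev: "\<And>c. c \<in> K \<Longrightarrow> \<forall>\<^sub>F n in F. Q n c"
  shows "\<forall>\<^sub>F n in F. \<forall>z\<in>K. \<exists>c\<in>K. dist c z < \<rho> \<and> Q n c"
proof -
  obtain C where C: "C \<subseteq> K" "finite C" "K \<subseteq> (\<Union>c\<in>C. ball c \<rho>)"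
  proof (rule compactE_image[OF K, of K "\<lambda>c. ball c \<rho>"])
    show "K \<subseteq> (\<Union>c\<in>K. ball c \<rho>)" using \<rho> by auto
  qed simp_all
  have "\<forall>\<^sub>F n in F. \<forall>c\<in>C. Q n c"
    using C(1,2) ev by (intro eventually_ball_finite) auto
  then show ?thesis
  proof eventually_elim
    case (elim n)
    show ?case
    proof
      fix z assume "z \<in> K"
      then obtain c where "c \<in> C" "z \<in> ball c \<rho>" using C(3) by blast
      then show "\<exists>c\<in>K. dist c z < \<rho> \<and> Q n c" using C(1) elim by auto
    qed
  qed
qed

lemma norm_shift_le_norm_shift_add:
  assumes "norm (u::'a::complex_inner) = 1"
  shows "norm (S u - z *\<^sub>C u) \<le> norm (S u - z' *\<^sub>C u) + cmod (z - z')"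
proof -
  have "S u - z *\<^sub>C u = (S u - z' *\<^sub>C u) + (z' - z) *\<^sub>C u" by (simp add: scaleC_diff_left)
  then have "norm (S u - z *\<^sub>C u) \<le> norm (S u - z' *\<^sub>C u) + norm ((z' - z) *\<^sub>C u)"
    by (metis norm_triangle_ineq)
  also have "norm ((z' - z) *\<^sub>C u) = cmod (z - z')" using assms by (simp add: norm_scaleC norm_minus_commute)
  finally show ?thesis .
qed

lemma norm_shift_sq:
  assumes "norm (u::'a::complex_inner) = 1"
  shows "(norm (S u - z *\<^sub>C u))\<^sup>2 = (norm (S u))\<^sup>2 + (cmod z)\<^sup>2 - 2 * Re (z * cinner (S u) u)"
  using norm_diff_sq[of "S u" "z *\<^sub>C u"] assms by (simp add: norm_scaleC cinner_scaleC_right)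

lemma Re_mult_diff_le: "Re (u * c) - Re (v * c) \<le> cmod (u - v) * cmod c"
proof -
  have "Re (u * c) - Re (v * c) = Re ((u - v) * c)" by (simp add: left_diff_distrib)
  also have "\<dots> \<le> cmod ((u - v) * c)" by (rule complex_Re_le_cmod)
  finally show ?thesis by (simp add: norm_mult)
qed

text \<open>Expanding \<open>\<parallel>S x - z x\<parallel>\<^sup>2 = \<parallel>S x\<parallel>\<^sup>2 + \<bar>z\<bar>\<^sup>2 - 2 Re (z \<langle>S x, x\<rangle>)\<close>: for large \<open>\<bar>z\<bar>\<close> the cross term
  dominates, so a unit vector that nearly maximizes \<open>Re (z \<langle>S x, x\<rangle>)\<close> nearly minimizes \<open>\<parallel>S x - z x\<parallel>\<close>.\<close>
lemma norm_shift_le_if_large_modulus: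
  fixes S :: "'a::complex_inner \<Rightarrow> 'a"
  assumes S: "bounded_linear S" and x: "norm x = 1" and y: "norm y = 1" and d: "\<delta> > 0"
    and large: "2 * onorm S + 2 * (onorm S)\<^sup>2 / \<delta> < cmod z"
    and near_max: "Re (z * cinner (S y) y) - cmod z * \<delta> / 4 \<le> Re (z * cinner (S x) x)"
  shows "norm (S x - z *\<^sub>C x) \<le> norm (S y - z *\<^sub>C y) + \<delta>"
proof -
  define K where "K = onorm S"
  define r where "r = cmod z"
  define A where "A = norm (S y - z *\<^sub>C y)"
  have K: "0 \<le> K" "\<And>u. norm (S u) \<le> K * norm u"
    unfolding K_def using onorm_pos_le[OF S] onorm[OF S] by simp_all
  have "0 \<le> 2 * K\<^sup>2 / \<delta>" using d by simp
  then have r2K: "2 * K \<le> r" and "2 * K\<^sup>2 / \<delta> \<le> r"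
    using large K(1) unfolding K_def r_def by linarith+
  then have rK2: "2 * K\<^sup>2 \<le> r * \<delta>" using d by (simp add: divide_le_eq)
  have "r - K \<le> A"
    using norm_triangle_ineq2[of "z *\<^sub>C y" "S y"] K(2)[of y] y
    by (simp add: A_def r_def norm_scaleC norm_minus_commute)
  then have A: "r / 2 \<le> A" using r2K by simp
  have "(norm (S x))\<^sup>2 \<le> K\<^sup>2" using K(2)[of x] x by (simp add: power_mono)
  then have "(norm (S x - z *\<^sub>C x))\<^sup>2 \<le> A\<^sup>2 + K\<^sup>2 + r * \<delta> / 2"
    using norm_shift_sq[OF x, of S z] norm_shift_sq[OF y, of S z] near_max zero_le_power2[of "norm (S y)"]
    unfolding A_def r_def by linarith
  also have "\<dots> \<le> A\<^sup>2 + 2 * A * \<delta>" using rK2 A d mult_right_mono[OF A, of \<delta>] by linarith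
  also have "\<dots> \<le> (A + \<delta>)\<^sup>2" by (simp add: power2_sum)
  finally show ?thesis
    unfolding A_def by (rule power2_le_imp_le) (use d in simp)
qed

lemma near_maximizer_exists:
  fixes g :: "'b \<Rightarrow> real"
  assumes X: "X \<noteq> {}" and bound: "\<And>x. x \<in> X \<Longrightarrow> g x \<le> M" and e: "e > 0"
  shows "\<exists>x\<in>X. \<forall>y\<in>X. g y \<le> g x + e"
proof -
  have bdd: "bdd_above (g ` X)" using bound by (rule bdd_aboveI2)
  have "(SUP x\<in>X. g x) - e < (SUP x\<in>X. g x)" using e by simp
  then have "\<exists>x\<in>X. (SUP x\<in>X. g x) - e < g x" by (rule less_cSUP_iff[OF X bdd, THEN iffD1])
  then obtain x where x: "x \<in> X" "(SUP x\<in>X. g x) - e < g x" by blast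
  have "g y \<le> g x + e" if "y \<in> X" for y using cSUP_upper[OF that bdd] x(2) by linarith
  with x(1) show ?thesis by blast
qed

context
  fixes P :: "nat \<Rightarrow> 'a::complex_inner \<Rightarrow> 'a" and S :: "'a \<Rightarrow> 'a"
  assumes P: "filtration P" and S: "bounded_linear S" and ne: "(UNIV :: 'a set) \<noteq> {0}"
begin

lemma unit_vector_exists: obtains u :: 'a where "norm u = 1"
  using orth_proj_range_unit[OF is_orth_proj_id] ne by auto

lemma norm_shift_diff_le:
  "norm ((S x - z *\<^sub>C x) - (S y - z *\<^sub>C y)) \<le> (onorm S + cmod z) * norm (x - y)"
proof -
  have "(S x - z *\<^sub>C x) - (S y - z *\<^sub>C y) = S (x - y) - z *\<^sub>C (x - y)"
    by (simp add: linear_diff[OF bounded_linear.linear[OF S]] scaleC_diff_right)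
  also have "norm \<dots> \<le> norm (S (x - y)) + norm (z *\<^sub>C (x - y))" by (rule norm_triangle_ineq4)
  also have "\<dots> \<le> onorm S * norm (x - y) + cmod z * norm (x - y)"
    using onorm[OF S, of "x - y"] by (simp add: norm_scaleC)
  finally show ?thesis by (simp add: algebra_simps)
qed

lemma norm_cinner_apply_self_le: "norm u = 1 \<Longrightarrow> cmod (cinner (S u) u) \<le> onorm S"
  using cinner_Cauchy_Schwarz[of "S u" u] onorm[OF S, of u] by simp

lemma norm_cinner_apply_self_diff_le:
  assumes "norm x = 1" "norm y = 1"
  shows "cmod (cinner (S x) x - cinner (S y) y) \<le> 2 * onorm S * norm (x - y)"
proof -
  have "cinner (S x) x - cinner (S y) y = cinner (S (x - y)) x + cinner (S y) (x - y)"
    by (simp add: linear_diff[OF bounded_linear.linear[OF S]] cinner_diff_left cinner_diff_right)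
  then have "cmod (cinner (S x) x - cinner (S y) y) \<le> cmod (cinner (S (x - y)) x) + cmod (cinner (S y) (x - y))"
    by (metis norm_triangle_ineq)
  also have "cmod (cinner (S (x - y)) x) \<le> onorm S * norm (x - y)"
    using cinner_Cauchy_Schwarz[of "S (x - y)" x] onorm[OF S, of "x - y"] assms by simp
  also have "cmod (cinner (S y) (x - y)) \<le> onorm S * norm (x - y)"
    using cinner_Cauchy_Schwarz[of "S y" "x - y"] onorm[OF S, of y] assms
      mult_right_mono[of "norm (S y)" "onorm S" "norm (x - y)"] by simp
  finally show ?thesis by simp
qed

text \<open>A near-minimizer of \<open>\<parallel>S y - z\<^sub>0 y\<parallel>\<close> over all unit vectors, approximated from \<open>range (P n)\<close>,
  stays a near-minimizer for all \<open>z\<close> close to \<open>z\<^sub>0\<close>.\<close>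
lemma eventually_near_minimizer_local:
  assumes d: "\<delta> > 0"
  shows "\<forall>\<^sub>F n in sequentially. \<exists>x\<in>range (P n). norm x = 1 \<and>
    (\<forall>y z. norm y = 1 \<longrightarrow> dist z0 z < \<delta> / 4 \<longrightarrow> norm (S x - z *\<^sub>C x) \<le> norm (S y - z *\<^sub>C y) + \<delta>)"
proof -
  define f where "f y = norm (S y - z0 *\<^sub>C y)" for y
  obtain u :: 'a where u: "norm u = 1" by (rule unit_vector_exists)
  have "\<exists>ys\<in>{y. norm y = 1}. \<forall>y\<in>{y. norm y = 1}. - f y \<le> - f ys + \<delta> / 4"
    using u d by (intro near_maximizer_exists[where M=0]) (auto simp: f_def)
  then obtain ys where ys: "norm ys = 1" "\<forall>y. norm y = 1 \<longrightarrow> f ys \<le> f y + \<delta> / 4" by force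
  define K where "K = onorm S + cmod z0 + 1"
  define \<eta> where "\<eta> = \<delta> / 4 / K"
  have K: "K > 0" using onorm_pos_le[OF S] by (simp add: K_def add_nonneg_pos)
  then have \<eta>_pos: "\<eta> > 0" using d by (simp add: \<eta>_def)
  have "(onorm S + cmod z0) * \<eta> \<le> K * \<eta>" using \<eta>_pos by (simp add: K_def)
  also have "\<dots> = \<delta> / 4" using K by (simp add: \<eta>_def)
  finally have \<eta>: "\<eta> > 0" "(onorm S + cmod z0) * \<eta> \<le> \<delta> / 4" using \<eta>_pos by simp_all
  show ?thesis
    using filtration_approx_unit[OF P ys(1) \<eta>(1)]
  proof eventually_elim
    case (elim n)
    then obtain x where x: "x \<in> range (P n)" "norm x = 1" "norm (x - ys) \<le> \<eta>" by blast
    have "f x \<le> f ys + (onorm S + cmod z0) * norm (x - ys)"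
      using norm_shift_diff_le[of x z0 ys] norm_triangle_ineq2[of "S x - z0 *\<^sub>C x" "S ys - z0 *\<^sub>C ys"]
      unfolding f_def by linarith
    also have "(onorm S + cmod z0) * norm (x - ys) \<le> (onorm S + cmod z0) * \<eta>"
      using x(3) onorm_pos_le[OF S] by (intro mult_left_mono) auto
    finally have fx: "f x \<le> f ys + \<delta> / 4" using \<eta>(2) by linarith
    have "norm (S x - z *\<^sub>C x) \<le> norm (S y - z *\<^sub>C y) + \<delta>"
      if y: "norm y = 1" and z: "dist z0 z < \<delta> / 4" for y z
    proof -
      have "cmod (z - z0) < \<delta> / 4" "cmod (z0 - z) < \<delta> / 4"
        using z by (simp_all add: dist_norm norm_minus_commute)
      moreover have "norm (S x - z *\<^sub>C x) \<le> f x + cmod (z - z0)"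
        using norm_shift_le_norm_shift_add[OF x(2)] unfolding f_def by blast
      moreover have "f y \<le> norm (S y - z *\<^sub>C y) + cmod (z0 - z)"
        using norm_shift_le_norm_shift_add[OF y] unfolding f_def by blast
      moreover have "f ys \<le> f y + \<delta> / 4" using ys(2) y by blast
      ultimately show ?thesis using fx by linarith
    qed
    with x show ?case by blast
  qed
qed

text \<open>The analogue for the direction of large \<open>z\<close>: a near-maximizer of \<open>Re (w \<langle>S y, y\<rangle>)\<close>,
  approximated from \<open>range (P n)\<close>, stays a near-maximizer for all \<open>w\<close> close to \<open>w\<^sub>0\<close>.\<close>
lemma eventually_near_maximizer_local:
  assumes w0: "cmod w0 \<le> 1" and \<eta>: "\<eta> > 0"
  shows "\<forall>\<^sub>F n in sequentially. \<exists>x\<in>range (P n). norm x = 1 \<and>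
    (\<forall>y w. norm y = 1 \<longrightarrow> dist w0 w < \<eta> / 4 / (onorm S + 1) \<longrightarrow>
      Re (w * cinner (S y) y) - \<eta> \<le> Re (w * cinner (S x) x))"
proof -
  define a where "a u = cinner (S u) u" for u
  define b where "b = onorm S + 1"
  have b: "b > 0" "onorm S \<le> b" using onorm_pos_le[OF S] by (simp_all add: b_def)
  define g where "g y = Re (w0 * a y)" for y
  obtain u :: 'a where u: "norm u = 1" by (rule unit_vector_exists)
  have g_le: "g y \<le> onorm S" if "norm y = 1" for y
  proof -
    have "g y \<le> cmod w0 * cmod (a y)" unfolding g_def by (metis complex_Re_le_cmod norm_mult)
    also have "\<dots> \<le> 1 * onorm S" using w0 norm_cinner_apply_self_le[OF that] unfolding a_def
      by (intro mult_mono) auto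
    finally show ?thesis by simp
  qed
  have "\<exists>ys\<in>{y. norm y = 1}. \<forall>y\<in>{y. norm y = 1}. g y \<le> g ys + \<eta> / 4"
    using u g_le \<eta> by (intro near_maximizer_exists) auto
  then obtain ys where ys: "norm ys = 1" "\<forall>y. norm y = 1 \<longrightarrow> g y \<le> g ys + \<eta> / 4" by force
  define e where "e = \<eta> / 8 / b"
  have e: "e > 0" "b * e = \<eta> / 8" using \<eta> b unfolding e_def by simp_all
  show ?thesis
    using filtration_approx_unit[OF P ys(1) e(1)]
  proof eventually_elim
    case (elim n)
    then obtain x where x: "x \<in> range (P n)" "norm x = 1" "norm (x - ys) \<le> e" by blast
    have "g ys - g x \<le> cmod w0 * cmod (a ys - a x)"
      unfolding g_def using Re_mult_diff_le[of "a ys" w0 "a x"] by (simp add: mult.commute)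
    also have "\<dots> \<le> 1 * (2 * onorm S * norm (ys - x))"
      using w0 norm_cinner_apply_self_diff_le[OF ys(1) x(2)] unfolding a_def by (intro mult_mono) auto
    also have "\<dots> \<le> 2 * b * e"
      using x(3) b onorm_pos_le[OF S] by (simp add: norm_minus_commute) (intro mult_mono, auto)
    finally have gx: "g ys - \<eta> / 4 \<le> g x" using e(2) by simp
    have "Re (w * a y) - \<eta> \<le> Re (w * a x)"
      if y: "norm y = 1" and w: "dist w0 w < \<eta> / 4 / (onorm S + 1)" for y w
    proof -
      have dw: "cmod (w - w0) \<le> \<eta> / 4 / b" using w by (simp add: dist_norm norm_minus_commute b_def)
      have pert: "cmod (w - w0) * cmod (a u) \<le> \<eta> / 4" if "norm u = 1" for u
      proof -
        have "cmod (w - w0) * cmod (a u) \<le> (\<eta> / 4 / b) * b"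
          using dw norm_cinner_apply_self_le[OF that] b \<eta> unfolding a_def by (intro mult_mono) auto
        then show ?thesis using b by simp
      qed
      have "Re (w * a y) - Re (w0 * a y) \<le> \<eta> / 4"
        using Re_mult_diff_le[of w "a y" w0] pert[OF y] by (simp add: mult.commute)
      moreover have "Re (w0 * a x) - Re (w * a x) \<le> \<eta> / 4"
        using Re_mult_diff_le[of w0 "a x" w] pert[OF x(2)] by (simp add: mult.commute norm_minus_commute)
      moreover have "g y \<le> g ys + \<eta> / 4" using ys(2) y by blast
      ultimately show ?thesis using gx unfolding g_def by linarith
    qed
    with x show ?case unfolding a_def by blast
  qed
qed

text \<open>Combine both local statements by compactness: bounded \<open>z\<close> are covered by finitely many
  discs, and large \<open>z = \<bar>z\<bar> w\<close> by finitely many arcs of directions \<open>w\<close> on the unit circle.\<close>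
lemma eventually_uniform_near_minimizer:
  assumes d: "\<delta> > 0"
  shows "\<forall>\<^sub>F n in sequentially. \<forall>z y. norm y = 1 \<longrightarrow>
    (\<exists>x\<in>range (P n). norm x = 1 \<and> norm (S x - z *\<^sub>C x) \<le> norm (S y - z *\<^sub>C y) + \<delta>)"
proof -
  define R where "R = 2 * onorm S + 2 * (onorm S)\<^sup>2 / \<delta>"
  define \<rho> where "\<rho> = \<delta> / 4 / 4 / (onorm S + 1)"
  have \<rho>: "\<rho> > 0" using d onorm_pos_le[OF S] by (simp add: \<rho>_def)
  have "\<forall>\<^sub>F n in sequentially. \<forall>z\<in>cball 0 R. \<exists>c\<in>cball 0 R. dist c z < \<delta> / 4 \<and>
      (\<exists>x\<in>range (P n). norm x = 1 \<and>
        (\<forall>y z. norm y = 1 \<longrightarrow> dist c z < \<delta> / 4 \<longrightarrow> norm (S x - z *\<^sub>C x) \<le> norm (S y - z *\<^sub>C y) + \<delta>))"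
    by (rule eventually_cover_compact[OF compact_cball]) (use d eventually_near_minimizer_local[OF d] in auto)
  moreover have "\<forall>\<^sub>F n in sequentially. \<forall>w\<in>sphere 0 1. \<exists>c\<in>sphere 0 1. dist c w < \<rho> \<and>
      (\<exists>x\<in>range (P n). norm x = 1 \<and>
        (\<forall>y w. norm y = 1 \<longrightarrow> dist c w < \<delta> / 4 / 4 / (onorm S + 1) \<longrightarrow>
          Re (w * cinner (S y) y) - \<delta> / 4 \<le> Re (w * cinner (S x) x)))"
    by (rule eventually_cover_compact[OF compact_sphere \<rho>])
      (rule eventually_near_maximizer_local, use d in simp_all)
  ultimately show ?thesis
  proof eventually_elim
    case (elim n)
    show ?case
    proof (intro allI impI)
      fix z and y :: 'a assume y: "norm y = 1"
      show "\<exists>x\<in>range (P n). norm x = 1 \<and> norm (S x - z *\<^sub>C x) \<le> norm (S y - z *\<^sub>C y) + \<delta>"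
      proof (cases "cmod z \<le> R")
        case True
        then show ?thesis using elim(1) y by (fastforce simp: mem_cball)
      next
        case False
        define r where "r = cmod z"
        define w where "w = z / complex_of_real r"
        have "0 \<le> 2 * (onorm S)\<^sup>2 / \<delta>" using d by simp
        then have r: "r > 0" using False onorm_pos_le[OF S] unfolding R_def r_def by linarith
        have w: "w \<in> sphere 0 1" using r by (simp add: w_def r_def norm_divide)
        have zw: "z = complex_of_real r * w" using r by (simp add: w_def)
        obtain x where x: "x \<in> range (P n)" "norm x = 1"
          and near_max: "Re (w * cinner (S y) y) - \<delta> / 4 \<le> Re (w * cinner (S x) x)"
          using elim(2) w y unfolding \<rho>_def by blast
        have "Re (z * cinner (S y) y) - r * \<delta> / 4 \<le> Re (z * cinner (S x) x)"
          using mult_left_mono[OF near_max, of r] r by (simp add: zw mult.assoc right_diff_distrib)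
        then have "norm (S x - z *\<^sub>C x) \<le> norm (S y - z *\<^sub>C y) + \<delta>"
          using False by (intro norm_shift_le_if_large_modulus[OF S x(2) y d]) (simp_all add: R_def r_def)
        with x show ?thesis by blast
      qed
    qed
  qed
qed

end

text \<open>The lower bound passes to the finite sections up to \<open>\<parallel>(I - P\<^sub>n) S P\<^sub>n\<parallel>\<close>; the upper bound
  comes from unit vectors of \<open>range P\<^sub>n\<close> that are near-minimizers for \<open>S - z\<close>, uniformly in \<open>z\<close>.\<close>
lemma uniform_limit_min_modulus_finite_sections:
  fixes S :: "'a::complex_inner \<Rightarrow> 'a"
  assumes S: "bounded_linear S" and P: "filtration P"
    and offdiag: "(\<lambda>n. onorm (offdiag (P n) S)) \<longlonglongrightarrow> 0" and ne: "(UNIV :: 'a set) \<noteq> {0}"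
  shows "uniform_limit UNIV (\<lambda>n z. min_modulus_on (range (P n)) (\<lambda>x. P n (S x) - z *\<^sub>C x))
    (\<lambda>z. min_modulus_on UNIV (\<lambda>x. S x - z *\<^sub>C x)) sequentially"
proof (rule uniform_limitI)
  fix e :: real assume e: "e > 0"
  have e2: "e / 2 > 0" using e by simp
  have "\<forall>\<^sub>F n in sequentially. onorm (offdiag (P n) S) < e / 2"
    using e2 by (rule order_tendstoD(2)[OF offdiag])
  with filtration_eventually_nontrivial[OF P ne] eventually_uniform_near_minimizer[OF P S ne e2]
  show "\<forall>\<^sub>F n in sequentially. \<forall>z\<in>UNIV.
    dist (min_modulus_on (range (P n)) (\<lambda>x. P n (S x) - z *\<^sub>C x)) (min_modulus_on UNIV (\<lambda>x. S x - z *\<^sub>C x)) < e"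
  proof eventually_elim
    case (elim n)
    have Pn: "is_orth_proj (P n)" by (rule filtration_orth_proj[OF P])
    obtain u where u: "u \<in> range (P n)" "norm u = 1" by (rule orth_proj_range_unit[OF Pn elim(1)])
    show ?case
    proof
      fix z
      let ?mn = "min_modulus_on (range (P n)) (\<lambda>x. P n (S x) - z *\<^sub>C x)"
      let ?m = "min_modulus_on UNIV (\<lambda>x. S x - z *\<^sub>C x)"
      have "?m - onorm (offdiag (P n) S) \<le> ?mn"
      proof (rule min_modulus_on_greatest[OF u])
        fix x assume x: "x \<in> range (P n)" "norm x = 1"
        show "?m - onorm (offdiag (P n) S) \<le> norm (P n (S x) - z *\<^sub>C x)"
          using min_modulus_on_le[of x UNIV "\<lambda>x. S x - z *\<^sub>C x"] norm_compression_shift_ge[OF Pn S x(1), of z] x(2)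
          by simp
      qed
      moreover have "?mn - e / 2 \<le> ?m"
      proof (rule min_modulus_on_greatest[of u])
        fix y :: 'a assume y: "norm y = 1"
        then obtain x where x: "x \<in> range (P n)" "norm x = 1"
          and le: "norm (S x - z *\<^sub>C x) \<le> norm (S y - z *\<^sub>C y) + e / 2"
          using elim(2) by blast
        have "?mn \<le> norm (P n (S x) - z *\<^sub>C x)" by (rule min_modulus_on_le[OF x])
        also have "\<dots> \<le> norm (S x - z *\<^sub>C x)"
          using compression_shift_eq[OF Pn x(1), of S z] norm_orth_proj_le[OF Pn] by simp
        finally show "?mn - e / 2 \<le> norm (S y - z *\<^sub>C y)" using le by simp
      qed (use u in simp_all)
      ultimately show "dist ?mn ?m < e" using elim(3) unfolding dist_real_def abs_less_iff by linarith
    qed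
  qed
qed

lemma uniform_limit_Psi_finite_sections:
  fixes T :: "'a::chilbert_space \<Rightarrow> 'a"
  assumes T: "bounded_clinear T" and P: "filtration P"
    and offdiag: "(\<lambda>n. onorm (offdiag (P n) T)) \<longlonglongrightarrow> 0" and ne: "(UNIV :: 'a set) \<noteq> {0}"
  shows "uniform_limit UNIV (\<lambda>n. Psi_on (range (P n)) (\<lambda>x. P n (T x))) (Psi T) sequentially"
proof -
  have T_bl: "bounded_linear T" using T by (simp add: bounded_clinear_def)
  have "\<forall>\<^sub>F n in sequentially. \<forall>z\<in>UNIV. Psi_on (range (P n)) (\<lambda>x. P n (T x)) z
      = min_modulus_on (range (P n)) (\<lambda>x. P n (T x) - z *\<^sub>C x)"
    using filtration_eventually_nontrivial[OF P ne]
    by eventually_elim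
      (simp add: Psi_finite_compression_eq_min_modulus[OF filtration_orth_proj[OF P] filtration_finite_rank[OF P] T])
  then show ?thesis
    by (rule uniform_limit_cong[THEN iffD2, OF _ Psi_eq_min_modulus_if_offdiag_tendsto_0[OF T P offdiag ne]])
      (rule uniform_limit_min_modulus_finite_sections[OF T_bl P offdiag ne])
qed

lemma uniform_limit_Psi_finite_sections_adjoint:
  fixes T :: "'a::chilbert_space \<Rightarrow> 'a"
  assumes T: "bounded_clinear T" and P: "filtration P"
    and offdiag: "(\<lambda>n. onorm (offdiag (P n) (adj T))) \<longlonglongrightarrow> 0" and ne: "(UNIV :: 'a set) \<noteq> {0}"
  shows "uniform_limit UNIV (\<lambda>n. Psi_on (range (P n)) (\<lambda>x. P n (T x))) (Psi T) sequentially"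
proof -
  have adj_T: "bounded_clinear (adj T)" by (rule bounded_clinear_adj[OF T])
  then have adj_T_bl: "bounded_linear (adj T)" by (simp add: bounded_clinear_def)
  have "\<forall>\<^sub>F n in sequentially. \<forall>z\<in>UNIV. Psi_on (range (P n)) (\<lambda>x. P n (T x)) z
      = min_modulus_on (range (P n)) (\<lambda>x. P n (adj T x) - cnj z *\<^sub>C x)"
    using filtration_eventually_nontrivial[OF P ne]
    by eventually_elim
      (simp add: Psi_finite_compression_eq_min_modulus_adjoint[OF filtration_orth_proj[OF P]
          filtration_finite_rank[OF P] T adj_T cinner_adj[OF T]])
  then show ?thesis
    by (rule uniform_limit_cong[THEN iffD2, OF _ Psi_eq_min_modulus_adjoint_if_offdiag_tendsto_0[OF T P offdiag ne]])
      (rule uniform_limit_compose'[OF uniform_limit_min_modulus_finite_sections[OF adj_T_bl P offdiag ne]], simp)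
qed

lemma UNIV_zero_fun_eq_id:
  fixes f :: "'a::zero \<Rightarrow> 'a"
  assumes "(UNIV :: 'a set) = {0}"
  shows "f = id"
proof
  have zero: "x = 0" for x :: 'a using UNIV_I[of x] unfolding assms by simp
  show "f x = id x" for x using zero[of x] zero[of "f x"] by simp
qed

theorem mainTheorem11:
  fixes T :: "'a::chilbert_space \<Rightarrow> 'a" and P :: "nat \<Rightarrow> 'a \<Rightarrow> 'a"
  assumes "separable_space TYPE('a)"
    and "bounded_clinear T"
    and "quasitriangular T \<or> quasitriangular (adj T)"
    and "filtration P"
    and "(quasitriangular T \<and> (\<lambda>n. onorm (offdiag (P n) T)) \<longlonglongrightarrow> 0)
       \<or> (quasitriangular (adj T) \<and> (\<lambda>n. onorm (offdiag (P n) (adj T))) \<longlonglongrightarrow> 0)"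
  shows "uniform_limit UNIV (\<lambda>n. Psi_on (range (P n)) (\<lambda>x. P n (T x))) (Psi T) sequentially"
proof (cases "(UNIV :: 'a set) = {0}")
  case True
  then have "P n = id" for n by (rule UNIV_zero_fun_eq_id)
  then show ?thesis by (simp add: uniform_limit_const)
next
  case False
  from assms(5) show ?thesis
    using uniform_limit_Psi_finite_sections[OF assms(2,4) _ False]
      uniform_limit_Psi_finite_sections_adjoint[OF assms(2,4) _ False]
    by blast
qed

end
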